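(* Let $R$ be a pmp equivalence relation, $F\subseteq\llbracket R\rrbracket$ finite, $n,d\geq1$, $\delta>0$ and $\varphi\in{\rm SA}(F,4n,\delta,d)$. Let $s\in\mathbf\Sigma F_\pm^n$ and let $s=\sum_{i=1}^k s_i$ with $s_1,\dots,s_k\in\mathbf\Sigma F_\pm^n$ pairwise orthogonal. Then \[ \Big|\varphi(s)-\sum_{i=1}^k\varphi(s_i)\pi_i(\varphi(s_1),\dots,\varphi(s_k))\Big|<150(2|F|+1)^{2n}\delta. \]
   Context: Let $(X,\mu)$ be a standard probability space and $R$ a pmp countable Borel equivalence relation. $\llbracket R\rrbracket$ denotes the set of partial measure-preserving Borel bijections $s:\operatorname{dom}s\to\operatorname{ran}s$ between Borel subsets of $X$ with graph contained in $R$, modulo null sets; product $(st)(x)=s(t(x))$ on $t^{-1}(\operatorname{ran}t\cap\operatorname{dom}s)$, inverse $s^{-1}$, identity $1$. A projection is the identity map $1_A$ of a Borel set $A$, and $1-1_A:=1_{X\setminus A}$. Pairwise orthogonal elements (pairwise disjoint domains and ranges) have a sum equal to $s_i$ on $\operatorname{dom}s_i$; $\mathbf\Sigma F$ is the set of finite sums of pairwise orthogonal elements of $F$; $F_\pm=F\cup\{s^{-1}:s\in F\}\cup\{1\}$; $F_\pm^n$ the products of $n$ elements of $F_\pm$. $|s-t|=\mu\{x\in\operatorname{dom}s\cup\operatorname{dom}t:s(x)\neq t(x)\}$ (with $s(x)\neq t(x)$ on $\operatorname{dom}s\triangle\operatorname{dom}t$), $\tau(s)=\mu\{x\in\operatorname{dom}s:s(x)=x\}$.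 $\llbracket d\rrbracket$: partial permutations of $\{1,\dots,d\}$ with uniform probability measure, same structure, trace $\operatorname{tr}$. ${\rm SA}(F,n,\delta,d)$ is the set of maps $\varphi:\llbracket R\rrbracket\to\llbracket d\rrbracket$ with $\varphi(1)=1$ such that $|\varphi(st)-\varphi(s)\varphi(t)|<\delta$ for all $s,t\in\mathbf\Sigma F_\pm^n$ with $st\in\mathbf\Sigma F_\pm^n$, and $|\operatorname{tr}(\varphi(s))-\tau(s)|<\delta$ for all $s\in\mathbf\Sigma F_\pm^n$. For $t_1,\dots,t_k\in\llbracket d\rrbracket$, $\pi_i(t_1,\dots,t_k)=\big(t_i^{-1}t_i\prod_{j\neq i}(1-t_j^{-1}t_j)\big)\,t_i^{-1}\big(t_it_i^{-1}\prod_{j\neq i}(1-t_jt_j^{-1})\big)t_i$; the elements $t_i\pi_i(t_1,\dots,t_k)$ are pairwise orthogonal, so their sum is defined. *)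

theory Defs
  imports "HOL-Probability.Probability"
begin

text \<open>Partial bijections are represented as partial maps of type 'b \<rightharpoonup> 'b.
 Product (s t)(x) = s(t(x)) is map_comp s t.\<close>

definition pinv :: "('b \<rightharpoonup> 'b) \<Rightarrow> ('b \<rightharpoonup> 'b)" where
  "pinv s = (\<lambda>y. if y \<in> ran s then Some (THE x. s x = Some y) else None)"

definition psum :: "('b \<rightharpoonup> 'b) list \<Rightarrow> ('b \<rightharpoonup> 'b)" where
  "psum ts = foldr (\<lambda>t acc. t ++ acc) ts Map.empty"

definition pprod :: "('b \<rightharpoonup> 'b) \<Rightarrow> ('b \<rightharpoonup> 'b) list \<Rightarrow> ('b \<rightharpoonup> 'b)" where
  "pprod one ts = foldr (\<lambda>t acc. map_comp t acc) ts one"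

definition pone :: "'a \<rightharpoonup> 'a" where "pone = Some"

definition partial_borel_bij :: "'a measure \<Rightarrow> ('a \<times> 'a) set \<Rightarrow> ('a \<rightharpoonup> 'a) \<Rightarrow> bool" where
  "partial_borel_bij M R s \<longleftrightarrow>
     dom s \<in> sets M \<and> ran s \<in> sets M \<and> inj_on s (dom s) \<and>
     (\<forall>x y. s x = Some y \<longrightarrow> (x, y) \<in> R) \<and>
     (the \<circ> s) \<in> measurable (restrict_space M (dom s)) M \<and>
     (the \<circ> pinv s) \<in> measurable (restrict_space M (ran s)) M"

definition meas_pres :: "'a measure \<Rightarrow> ('a \<rightharpoonup> 'a) \<Rightarrow> bool" where
  "meas_pres M s \<longleftrightarrow>
     (\<forall>B\<in>sets M. B \<subseteq> ran s \<longrightarrow> emeasure M (dom s \<inter> (the \<circ> s) -` B) = emeasure M B)"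

definition std_prob_space :: "'a::polish_space measure \<Rightarrow> bool" where
  "std_prob_space M \<longleftrightarrow> prob_space M \<and> sets M = sets borel"

definition pmp_cber :: "'a measure \<Rightarrow> ('a \<times> 'a) set \<Rightarrow> bool" where
  "pmp_cber M R \<longleftrightarrow> equiv UNIV R \<and> R \<in> sets (M \<Otimes>\<^sub>M M) \<and>
     (\<forall>x. countable (R `` {x})) \<and>
     (\<forall>s. partial_borel_bij M R s \<longrightarrow> meas_pres M s)"

text \<open>Representatives of elements of the full pseudogroup [[R]]; elements of [[R]]
 are classes of representatives modulo the relation peq (equality almost everywhere).\<close>
definition pelem :: "'a measure \<Rightarrow> ('a \<times> 'a) set \<Rightarrow> ('a \<rightharpoonup> 'a) \<Rightarrow> bool" where
  "pelem M R s \<longleftrightarrow> partial_borel_bij M R s \<and> meas_pres M s"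

definition peq :: "'a measure \<Rightarrow> ('a \<rightharpoonup> 'a) \<Rightarrow> ('a \<rightharpoonup> 'a) \<Rightarrow> bool" where
  "peq M s t \<longleftrightarrow> (AE x in M. s x = t x)"

definition pdist :: "'a measure \<Rightarrow> ('a \<rightharpoonup> 'a) \<Rightarrow> ('a \<rightharpoonup> 'a) \<Rightarrow> real" where
  "pdist M s t = measure M {x. s x \<noteq> t x}"

definition ptau :: "'a measure \<Rightarrow> ('a \<rightharpoonup> 'a) \<Rightarrow> real" where
  "ptau M s = measure M {x. s x = Some x}"

definition orth :: "'a measure \<Rightarrow> ('a \<rightharpoonup> 'a) \<Rightarrow> ('a \<rightharpoonup> 'a) \<Rightarrow> bool" where
  "orth M s t \<longleftrightarrow> dom s \<inter> dom t \<in> null_sets M \<and> ran s \<inter> ran t \<in> null_sets M"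

definition pw_orth :: "'a measure \<Rightarrow> ('a \<rightharpoonup> 'a) list \<Rightarrow> bool" where
  "pw_orth M ts \<longleftrightarrow> (\<forall>i<length ts. \<forall>j<length ts. i \<noteq> j \<longrightarrow> orth M (ts ! i) (ts ! j))"

definition SigmaP :: "'a measure \<Rightarrow> ('a \<times> 'a) set \<Rightarrow> ('a \<rightharpoonup> 'a) set \<Rightarrow> ('a \<rightharpoonup> 'a) set" where
  "SigmaP M R G = {s. pelem M R s \<and>
     (\<exists>ts. set ts \<subseteq> G \<and> pw_orth M ts \<and> peq M s (psum ts))}"

definition Fpm :: "('a \<rightharpoonup> 'a) set \<Rightarrow> ('a \<rightharpoonup> 'a) set" where
  "Fpm F = F \<union> pinv ` F \<union> {pone}"

definition ppow :: "('a \<rightharpoonup> 'a) set \<Rightarrow> nat \<Rightarrow> ('a \<rightharpoonup> 'a) set" where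
  "ppow G n = {pprod pone us | us. length us = n \<and> set us \<subseteq> G}"

definition pperm :: "nat \<Rightarrow> (nat \<rightharpoonup> nat) \<Rightarrow> bool" where
  "pperm d t \<longleftrightarrow> inj_on t (dom t) \<and> dom t \<subseteq> {1..d} \<and> ran t \<subseteq> {1..d}"

definition dOne :: "nat \<Rightarrow> (nat \<rightharpoonup> nat)" where
  "dOne d = (\<lambda>x. if x \<in> {1..d} then Some x else None)"

definition dcompl :: "nat \<Rightarrow> (nat \<rightharpoonup> nat) \<Rightarrow> (nat \<rightharpoonup> nat)" where
  "dcompl d p = (\<lambda>x. if x \<in> {1..d} \<and> p x = None then Some x else None)"

definition ddist :: "nat \<Rightarrow> (nat \<rightharpoonup> nat) \<Rightarrow> (nat \<rightharpoonup> nat) \<Rightarrow> real" where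
  "ddist d a b = real (card {x\<in>{1..d}. a x \<noteq> b x}) / real d"

definition dtr :: "nat \<Rightarrow> (nat \<rightharpoonup> nat) \<Rightarrow> real" where
  "dtr d a = real (card {x\<in>{1..d}. a x = Some x}) / real d"

text \<open>pi_i(t_1,...,t_k), with 0-based index i < k = length ts.\<close>
definition dpi :: "nat \<Rightarrow> (nat \<rightharpoonup> nat) list \<Rightarrow> nat \<Rightarrow> (nat \<rightharpoonup> nat)" where
  "dpi d ts i =
    (let others = filter (\<lambda>j. j \<noteq> i) [0..<length ts];
         L = map_comp (map_comp (pinv (ts ! i)) (ts ! i))
               (pprod (dOne d) (map (\<lambda>j. dcompl d (map_comp (pinv (ts ! j)) (ts ! j))) others));
         Rt = map_comp (map_comp (ts ! i) (pinv (ts ! i)))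
               (pprod (dOne d) (map (\<lambda>j. dcompl d (map_comp (ts ! j) (pinv (ts ! j)))) others))
     in map_comp L (map_comp (pinv (ts ! i)) (map_comp Rt (ts ! i))))"

text \<open>phi is a map on [[R]]: it is given on representatives and must respect peq.\<close>
definition SA :: "'a measure \<Rightarrow> ('a \<times> 'a) set \<Rightarrow> ('a \<rightharpoonup> 'a) set \<Rightarrow> nat \<Rightarrow> real \<Rightarrow> nat
     \<Rightarrow> (('a \<rightharpoonup> 'a) \<Rightarrow> (nat \<rightharpoonup> nat)) set" where
  "SA M R F n \<delta> d = {\<phi>.
     (\<forall>s. pelem M R s \<longrightarrow> pperm d (\<phi> s)) \<and>
     (\<forall>s t. pelem M R s \<longrightarrow> pelem M R t \<longrightarrow> peq M s t \<longrightarrow> \<phi> s = \<phi> t) \<and>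
     \<phi> pone = dOne d \<and>
     (\<forall>s\<in>SigmaP M R (ppow (Fpm F) n). \<forall>t\<in>SigmaP M R (ppow (Fpm F) n).
        map_comp s t \<in> SigmaP M R (ppow (Fpm F) n) \<longrightarrow>
        ddist d (\<phi> (map_comp s t)) (map_comp (\<phi> s) (\<phi> t)) < \<delta>) \<and>
     (\<forall>s\<in>SigmaP M R (ppow (Fpm F) n). \<bar>dtr d (\<phi> s) - ptau M s\<bar> < \<delta>)}"

end

theory Submission
  imports Defs
begin

(* Write a = phi(s), t_i = phi(s_i), e_i = phi(1_{dom s_i}), E = phi(1_{dom s}) and
   z = phi(0).  Every identity of the pseudogroup among s, s_i and these projections
   (s 1_{dom s_i} = s_i, s_i 1_{dom s_i} = s_i, 1_{dom s_i}^2 = 1_{dom s_i},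
   1_{dom s_i} 1_{dom s_j} = 0 a.e. for i <> j, 1_{dom s} 1_{dom s_i} = 1_{dom s_i}, ...)
   involves only elements of Sigma F_pm^{4n}, so phi satisfies it up to delta d points of
   {1..d}; the traces fix the numbers of fixed points of E and e_i up to delta d.
   A purely combinatorial argument on partial permutations of {1..d} (locale
   approx_decomposition) then shows that a and the sum of the t_i pi_i(t_1,...,t_k) can only
   differ on an exceptional set of at most 17 (K+1)^2 delta d points, K the number of
   non-null summands; the only non-local ingredient is a Bonferroni inequality controlling
   the fixed points of E not covered by the e_i.  Finally K <= |F_pm^n| <= (2|F|+1)^n,
   because distinct orthogonal non-null summands dominate distinct words of F_pm^n. *)

section \<open>Partial bijections\<close>

lemma inj_on_dom_eq: "inj_on t (dom t) \<Longrightarrow> t x = Some y \<Longrightarrow> t x' = Some y \<Longrightarrow> x = x'"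
  by (metis domI inj_onD)

lemma pinv_Some:
  assumes "inj_on t (dom t)"
  shows "pinv t y = Some x \<longleftrightarrow> t x = Some y"
proof
  assume h: "t x = Some y"
  hence "y \<in> ran t" by (auto simp: ran_def)
  moreover have "(THE x. t x = Some y) = x"
    by (rule the_equality) (use h assms inj_on_dom_eq in metis)+
  ultimately show "pinv t y = Some x" by (simp add: pinv_def)
next
  assume h: "pinv t y = Some x"
  hence y: "y \<in> ran t" by (auto simp: pinv_def split: if_splits)
  then obtain x0 where x0: "t x0 = Some y" by (auto simp: ran_def)
  have "(THE x. t x = Some y) = x0"
    by (rule the_equality) (use x0 assms inj_on_dom_eq in metis)+
  with h y x0 show "t x = Some y" by (simp add: pinv_def)
qed

lemma pinv_None: "pinv t y = None \<longleftrightarrow> y \<notin> ran t"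
  by (simp add: pinv_def)

lemma comp_pinv_apply:
  assumes "inj_on t (dom t)"
  shows "(t \<circ>\<^sub>m pinv t) y = (if y \<in> ran t then Some y else None)"
proof (cases "pinv t y")
  case None thus ?thesis by (simp add: pinv_None)
next
  case (Some x)
  hence "t x = Some y" using pinv_Some[OF assms] by simp
  thus ?thesis using Some by (auto simp: ran_def)
qed

lemma pinv_comp_apply:
  assumes "inj_on t (dom t)"
  shows "(pinv t \<circ>\<^sub>m t) x = (if x \<in> dom t then Some x else None)"
  using pinv_Some[OF assms, of "the (t x)" x] by (cases "t x") auto

lemma pinv_inj:
  assumes "inj_on f (dom f)"
  shows "inj_on (pinv f) (dom (pinv f))"
proof (rule inj_onI)
  fix x y assume "x \<in> dom (pinv f)" "y \<in> dom (pinv f)" and e: "pinv f x = pinv f y"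
  then obtain z where z: "pinv f x = Some z" by auto
  hence "f z = Some x" using pinv_Some[OF assms] by blast
  moreover have "f z = Some y" using z e pinv_Some[OF assms] by metis
  ultimately show "x = y" by simp
qed

lemma option_eq_if_Some_iff: "(\<And>y. a = Some y \<longleftrightarrow> b = Some y) \<Longrightarrow> a = b"
  by (cases a; cases b) auto

lemma pinv_pinv: "inj_on f (dom f) \<Longrightarrow> pinv (pinv f) = f"
  by (rule ext, rule option_eq_if_Some_iff) (metis pinv_Some pinv_inj)

lemma map_comp_assoc: "(f \<circ>\<^sub>m g) \<circ>\<^sub>m h = f \<circ>\<^sub>m (g \<circ>\<^sub>m h)"
  by (rule ext) (simp add: map_comp_def split: option.splits)

lemma restrict_map_dom_self: "X |` dom X = X"
proof (rule ext)
  fix x show "(X |` dom X) x = X x" by (cases "X x") (auto simp: restrict_map_def)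
qed

lemma inj_on_restrict_map:
  assumes "inj_on f (dom f)"
  shows "inj_on (f |` A) (dom (f |` A))"
proof (rule inj_onI)
  fix x y assume "x \<in> dom (f|`A)" "y \<in> dom (f|`A)" "(f|`A) x = (f|`A) y"
  hence "x \<in> dom f" "y \<in> dom f" "f x = f y" by (auto simp: restrict_map_def split: if_splits)
  thus "x = y" using inj_onD[OF assms] by blast
qed

lemma pinv_restrict_map:
  assumes inj: "inj_on f (dom f)" and y: "y \<in> ran (f |` A)"
  shows "pinv (f |` A) y = pinv f y"
proof -
  obtain x where x: "x \<in> A" "f x = Some y" using ran_restrictD[OF y] by blast
  hence "(f |` A) x = Some y" by simp
  thus ?thesis using x pinv_Some[OF inj] pinv_Some[OF inj_on_restrict_map[OF inj]] by metis
qed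

lemma pone_comp [simp]: "pone \<circ>\<^sub>m b = b"
  by (rule ext) (simp add: map_comp_def pone_def split: option.splits)

lemma comp_pone [simp]: "b \<circ>\<^sub>m pone = b"
  by (rule ext) (simp add: map_comp_def pone_def)

lemma comp_proj: "X \<circ>\<^sub>m (pone |` A) = X |` A"
  by (rule ext) (simp add: restrict_map_def pone_def)

lemma proj_comp_proj: "(pone |` A) \<circ>\<^sub>m (pone |` B) = pone |` (A \<inter> B)"
  by (rule ext) (simp add: restrict_map_def pone_def map_comp_def)

lemma inj_pone: "inj_on pone (dom pone)"
  by (simp add: pone_def)

lemma pinv_pone: "pinv pone = pone"
proof (rule ext)
  fix y show "pinv pone y = pone y"
    using pinv_Some[OF inj_pone, of y y] by (simp add: pone_def)
qed

lemma dom_pone [simp]: "dom pone = UNIV"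
  by (simp add: pone_def)

lemma ran_proj [simp]: "ran (pone |` A) = A"
  by (auto simp: pone_def ran_def restrict_map_def)

section \<open>Orthogonal sums and products of partial maps\<close>

text \<open>psum is the right fold of map_add: earlier summands take precedence.\<close>
lemma psum_Cons: "psum (t # ts) = t ++ psum ts"
  by (simp add: psum_def)

lemma psum_None: "psum ts x = None \<longleftrightarrow> (\<forall>t\<in>set ts. t x = None)"
  by (induction ts) (auto simp: psum_def)

lemma dom_psum: "x \<in> dom (psum ts) \<longleftrightarrow> (\<exists>t\<in>set ts. x \<in> dom t)"
  using psum_None[of ts x] by auto

lemma psum_Some: "psum ts x = Some y \<Longrightarrow> \<exists>t\<in>set ts. t x = Some y"
  by (induction ts) (auto simp: psum_def map_add_Some_iff)

lemma psum_unique: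
  "i < length ts \<Longrightarrow> (\<forall>j<length ts. j \<noteq> i \<longrightarrow> (ts!j) x = None) \<Longrightarrow> psum ts x = (ts!i) x"
proof (induction ts arbitrary: i)
  case Nil thus ?case by simp
next
  case (Cons t ts)
  show ?case
  proof (cases i)
    case 0
    have "\<forall>u\<in>set ts. u x = None"
    proof
      fix u assume "u \<in> set ts"
      then obtain k where "k < length ts" "u = ts!k" by (auto simp: in_set_conv_nth)
      thus "u x = None" using Cons.prems(2)[rule_format, of "Suc k"] 0 by simp
    qed
    hence "psum ts x = None" by (simp add: psum_None)
    thus ?thesis using 0 by (simp add: psum_Cons map_add_def)
  next
    case (Suc i')
    have "t x = None" using Cons.prems Suc by force
    moreover have "psum ts x = (ts!i') x" using Cons.prems Suc by (intro Cons.IH) auto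
    ultimately show ?thesis using Suc by (simp add: psum_Cons map_add_def split: option.splits)
  qed
qed

lemma psum_projs:
  "psum (map (\<lambda>t. pone |` dom t) ts) x = (if \<exists>t\<in>set ts. x \<in> dom t then Some x else None)"
proof (cases "\<exists>t\<in>set ts. x \<in> dom t")
  case True
  hence "psum (map (\<lambda>t. pone |` dom t) ts) x \<noteq> None"
    by (auto simp: psum_None restrict_map_def pone_def)
  then obtain y where y: "psum (map (\<lambda>t. pone |` dom t) ts) x = Some y" by auto
  then obtain t where "t \<in> set ts" "(pone |` dom t) x = Some y" using psum_Some by fastforce
  hence "y = x" by (auto simp: restrict_map_def pone_def split: if_splits)
  thus ?thesis using y True by simp
next
  case False thus ?thesis by (auto simp: psum_None restrict_map_def)
qed

lemma pprod_Nil: "pprod pone [] = pone"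
  by (simp add: pprod_def)

lemma pprod_Cons: "pprod pone (u # us) = u \<circ>\<^sub>m pprod pone us"
  by (simp add: pprod_def)

lemma pprod_append: "pprod pone (xs @ ys) = pprod pone xs \<circ>\<^sub>m pprod pone ys"
proof -
  have "foldr (\<circ>\<^sub>m) xs b = foldr (\<circ>\<^sub>m) xs pone \<circ>\<^sub>m b" for b :: "'a \<rightharpoonup> 'a"
    by (induction xs) (simp_all add: map_comp_assoc)
  from this[of "foldr (\<circ>\<^sub>m) ys pone"] show ?thesis by (simp add: pprod_def)
qed

lemma pprod_replicate_pone: "pprod pone (replicate m pone) = pone"
  by (induction m) (simp_all add: pprod_def)

lemma left_inverse_comp:
  assumes inj: "inj_on u (dom u)" and QP: "Q \<circ>\<^sub>m P = pone |` dom P"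
  shows "(Q \<circ>\<^sub>m pinv u) \<circ>\<^sub>m (u \<circ>\<^sub>m P) = pone |` dom (u \<circ>\<^sub>m P)"
proof (rule ext)
  fix x
  show "((Q \<circ>\<^sub>m pinv u) \<circ>\<^sub>m (u \<circ>\<^sub>m P)) x = (pone |` dom (u \<circ>\<^sub>m P)) x"
  proof (cases "P x")
    case None thus ?thesis by (simp add: dom_def)
  next
    case (Some y)
    hence "x \<in> dom P" by blast
    hence "(Q \<circ>\<^sub>m P) x = Some x" using QP by (simp add: pone_def)
    hence Qy: "Q y = Some x" using Some by simp
    show ?thesis
    proof (cases "u y")
      case None thus ?thesis using Some by (simp add: dom_def)
    next
      case (Some z)
      hence "pinv u z = Some y" using pinv_Some[OF inj] by blast
      thus ?thesis using \<open>P x = Some y\<close> Some Qy by (simp add: dom_def pone_def)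
    qed
  qed
qed

lemma pprod_rev_pinv:
  assumes "\<forall>u\<in>set us. inj_on u (dom u)"
  shows "pprod pone (rev (map pinv us)) \<circ>\<^sub>m pprod pone us = pone |` dom (pprod pone us)"
  using assms
proof (induction us)
  case Nil show ?case by (rule ext) (simp add: pprod_def pone_def)
next
  case (Cons u us)
  have inj: "inj_on u (dom u)"
    and IH: "pprod pone (rev (map pinv us)) \<circ>\<^sub>m pprod pone us = pone |` dom (pprod pone us)"
    using Cons by simp_all
  have "pprod pone (rev (map pinv (u # us))) = pprod pone (rev (map pinv us)) \<circ>\<^sub>m pinv u"
    by (simp add: pprod_append pprod_Cons pprod_Nil)
  thus ?case using left_inverse_comp[OF inj IH] by (simp only: pprod_Cons)
qed

section \<open>Counting on partial permutations of {1..d}\<close>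

text \<open>For partial permutations a, b of {1..d}, d |a - b| and d tr(a) are the cardinalities of
  the disagreement set and of the fixed-point set.\<close>

definition disagr :: "nat \<Rightarrow> (nat \<rightharpoonup> nat) \<Rightarrow> (nat \<rightharpoonup> nat) \<Rightarrow> nat set" where
  "disagr d a b = {x\<in>{1..d}. a x \<noteq> b x}"

definition fixed :: "nat \<Rightarrow> (nat \<rightharpoonup> nat) \<Rightarrow> nat set" where
  "fixed d a = {x\<in>{1..d}. a x = Some x}"

lemma disagr_subset [simp]: "disagr d a b \<subseteq> {1..d}"
  by (auto simp: disagr_def)

lemma fixed_subset [simp]: "fixed d a \<subseteq> {1..d}"
  by (auto simp: fixed_def)

lemma finite_disagr [simp]: "finite (disagr d a b)"
  by (rule finite_subset[OF disagr_subset]) simp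

lemma finite_fixed [simp]: "finite (fixed d a)"
  by (rule finite_subset[OF fixed_subset]) simp

lemma disagr_iff: "x \<in> disagr d a b \<longleftrightarrow> x \<in> {1..d} \<and> a x \<noteq> b x"
  by (simp add: disagr_def)

lemma fixed_iff: "x \<in> fixed d a \<longleftrightarrow> x \<in> {1..d} \<and> a x = Some x"
  by (simp add: fixed_def)

lemma card_disagr_of_ddist:
  assumes "d \<ge> 1" "ddist d a b < \<delta>"
  shows "real (card (disagr d a b)) \<le> \<delta> * d"
  using assms by (simp add: ddist_def disagr_def divide_less_eq)

lemma card_fixed_of_dtr:
  assumes "d \<ge> 1" "\<bar>dtr d a - \<tau>\<bar> < \<delta>"
  shows "real (card (fixed d a)) \<le> \<tau> * d + \<delta> * d" "real (card (fixed d a)) \<ge> \<tau> * d - \<delta> * d"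
proof -
  have "real (card (fixed d a)) / real d < \<tau> + \<delta>" "real (card (fixed d a)) / real d > \<tau> - \<delta>"
    using assms(2) by (simp_all add: dtr_def fixed_def abs_less_iff)
  hence "real (card (fixed d a)) < (\<tau> + \<delta>) * d" "real (card (fixed d a)) > (\<tau> - \<delta>) * d"
    using assms(1) by (simp_all add: divide_less_eq less_divide_eq)
  thus "real (card (fixed d a)) \<le> \<tau> * d + \<delta> * d" "real (card (fixed d a)) \<ge> \<tau> * d - \<delta> * d"
    by (simp_all add: algebra_simps)
qed

lemma pperm_dom: "pperm d g \<Longrightarrow> dom g \<subseteq> {1..d}"
  by (simp add: pperm_def)

lemma pperm_inj: "pperm d g \<Longrightarrow> inj_on g (dom g)"
  by (simp add: pperm_def)

lemma finite_dom_pperm: "pperm d g \<Longrightarrow> finite (dom g)"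
  using finite_subset[OF pperm_dom] by blast

lemma card_ran_le_card_dom: "finite (dom g) \<Longrightarrow> card (ran g) \<le> card (dom g)"
  unfolding ran_alt_def by (rule card_image_le)

text \<open>The domain of g consists of fixed points of g and of points where g and g^2 differ;
  so an almost idempotent g with almost no fixed points has a small domain.\<close>
lemma dom_subset_fixed_disagr:
  assumes "pperm d g"
  shows "dom g \<subseteq> fixed d g \<union> disagr d g (g \<circ>\<^sub>m g)"
proof
  fix x assume x: "x \<in> dom g"
  then obtain y where y: "g x = Some y" by auto
  have "x \<in> {1..d}" using x pperm_dom[OF assms] by auto
  moreover have "g x = Some x \<or> g x \<noteq> (g \<circ>\<^sub>m g) x"
  proof (cases "y = x")
    case False
    hence "g y \<noteq> Some y" using inj_on_dom_eq[OF pperm_inj[OF assms] y] by metis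
    thus ?thesis using y by simp
  qed (use y in simp)
  ultimately show "x \<in> fixed d g \<union> disagr d g (g \<circ>\<^sub>m g)" by (auto simp: fixed_iff disagr_iff)
qed

lemma fixed_of_agree_comp:
  assumes "pperm d g" "x \<in> dom g" "x \<notin> disagr d g (g \<circ>\<^sub>m h)"
  shows "x \<in> fixed d h"
proof -
  obtain y where y: "g x = Some y" using assms(2) by auto
  have xd: "x \<in> {1..d}" using assms(2) pperm_dom[OF assms(1)] by auto
  hence "(g \<circ>\<^sub>m h) x = Some y" using assms(3) y disagr_iff by metis
  then obtain x' where "h x = Some x'" "g x' = Some y" by (cases "h x") auto
  with inj_on_dom_eq[OF pperm_inj[OF assms(1)] y] have "h x = Some x" by metis
  thus ?thesis using xd fixed_iff by blast
qed

text \<open>Common fixed points of g and h are fixed by g h, hence they lie in dom z unless g h and z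
  disagree there.\<close>
lemma fixed_inter_subset: "fixed d g \<inter> fixed d h \<subseteq> disagr d z (g \<circ>\<^sub>m h) \<union> dom z"
  by (auto simp: fixed_iff disagr_iff)

lemma card_Un_real: "real (card (A \<union> B)) \<le> real (card A) + real (card B)"
  using card_Un_le[of A B] by linarith

lemma card_Un_real_le:
  "real (card A) \<le> x \<Longrightarrow> real (card B) \<le> y \<Longrightarrow> real (card (A \<union> B)) \<le> x + y"
  using card_Un_real[of A B] by linarith

lemma card_UN_real:
  assumes "finite I" "\<And>i. i \<in> I \<Longrightarrow> real (card (S i)) \<le> r"
  shows "real (card (\<Union>i\<in>I. S i)) \<le> real (card I) * r"
proof -
  have "card (\<Union>i\<in>I. S i) \<le> (\<Sum>i\<in>I. card (S i))"
    by (rule card_UN_le[OF assms(1)])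
  hence "real (card (\<Union>i\<in>I. S i)) \<le> (\<Sum>i\<in>I. real (card (S i)))"
    by (metis of_nat_le_iff of_nat_sum)
  also have "\<dots> \<le> real (card I) * r"
    using sum_bounded_above[of I "\<lambda>i. real (card (S i))" r] assms(2) by simp
  finally show ?thesis .
qed

lemma card_mono_real: "finite B \<Longrightarrow> A \<subseteq> B \<Longrightarrow> real (card A) \<le> real (card B)"
  by (simp add: card_mono)

text \<open>Bonferroni inequality: the sizes of finitely many finite sets add up to at most the size of
  their union plus the sizes of the pairwise intersections (J bounds the range of the partners).\<close>
lemma sum_card_le_card_Union_overlaps:
  assumes J: "finite J" and fin: "\<And>i. i \<in> J \<Longrightarrow> finite (A i)" and IJ: "I \<subseteq> J"
  shows "(\<Sum>i\<in>I. card (A i)) \<le> card (\<Union>i\<in>I. A i) + (\<Sum>i\<in>I. \<Sum>j\<in>J-{i}. card (A i \<inter> A j))"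
proof -
  have "finite I" using finite_subset[OF IJ J] .
  thus ?thesis using IJ
  proof (induction I rule: finite_induct)
    case empty thus ?case by simp
  next
    case (insert a I)
    let ?U = "\<Union>i\<in>I. A i"
    have fa: "finite (A a)" and fU: "finite ?U" using insert fin by auto
    have "card (A a \<inter> ?U) \<le> (\<Sum>j\<in>I. card (A a \<inter> A j))"
      unfolding Int_UN_distrib by (rule card_UN_le[OF insert.hyps(1)])
    also have "\<dots> \<le> (\<Sum>j\<in>J-{a}. card (A a \<inter> A j))"
      using insert J by (intro sum_mono2) auto
    finally have "card (A a \<inter> ?U) \<le> (\<Sum>j\<in>J-{a}. card (A a \<inter> A j))" .
    moreover have "card (A a) + card ?U = card (A a \<union> ?U) + card (A a \<inter> ?U)"
      using card_Un_Int[OF fa fU] .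
    moreover have "(\<Sum>i\<in>I. card (A i)) \<le> card ?U + (\<Sum>i\<in>I. \<Sum>j\<in>J-{i}. card (A i \<inter> A j))"
      using insert by blast
    ultimately show ?case using insert.hyps by (simp add: Un_commute)
  qed
qed

lemma sum_card_le_card_Union_pairwise:
  assumes I: "finite I" and fin: "\<And>i. i \<in> I \<Longrightarrow> finite (A i)" and r: "0 \<le> r"
    and pair: "\<And>i j. i \<in> I \<Longrightarrow> j \<in> I \<Longrightarrow> i \<noteq> j \<Longrightarrow> real (card (A i \<inter> A j)) \<le> r"
  shows "(\<Sum>i\<in>I. real (card (A i))) \<le> real (card (\<Union>i\<in>I. A i)) + real (card I) * (real (card I) * r)"
proof -
  have "real (\<Sum>i\<in>I. card (A i))
      \<le> real (card (\<Union>i\<in>I. A i) + (\<Sum>i\<in>I. \<Sum>j\<in>I-{i}. card (A i \<inter> A j)))"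
    using sum_card_le_card_Union_overlaps[OF I fin] by (intro of_nat_mono) simp
  hence bonf: "(\<Sum>i\<in>I. real (card (A i)))
      \<le> real (card (\<Union>i\<in>I. A i)) + (\<Sum>i\<in>I. \<Sum>j\<in>I-{i}. real (card (A i \<inter> A j)))"
    by simp
  have "(\<Sum>j\<in>I-{i}. real (card (A i \<inter> A j))) \<le> real (card I) * r" if i: "i \<in> I" for i
  proof -
    have "(\<Sum>j\<in>I-{i}. real (card (A i \<inter> A j))) \<le> real (card (I - {i})) * r"
      using sum_bounded_above[of "I - {i}" "\<lambda>j. real (card (A i \<inter> A j))" r] pair[OF i] by auto
    also have "\<dots> \<le> real (card I) * r" using r I by (intro mult_right_mono) (auto intro: card_mono)
    finally show ?thesis .
  qed
  hence "(\<Sum>i\<in>I. \<Sum>j\<in>I-{i}. real (card (A i \<inter> A j))) \<le> real (card I) * (real (card I) * r)"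
    using sum_bounded_above[of I _ "real (card I) * r"] by simp
  thus ?thesis using bonf by linarith
qed

section \<open>The elements t_i pi_i(t_1, ..., t_k)\<close>

text \<open>The part of dom t_i on which t_i is alone: no other t_j is defined there and no other t_j
  has the image point in its range. There, and only there, t_i pi_i equals t_i.\<close>
definition excl_part :: "(nat \<rightharpoonup> nat) list \<Rightarrow> nat \<Rightarrow> nat set" where
  "excl_part ts i = {x \<in> dom (ts!i). \<forall>j<length ts. j \<noteq> i \<longrightarrow>
                      x \<notin> dom (ts!j) \<and> the ((ts!i) x) \<notin> ran (ts!j)}"

lemma pprod_complements:
  "pprod (dOne d) (map (\<lambda>j. dcompl d (h j)) js) y =
    (if y \<in> {1..d} \<and> (\<forall>j\<in>set js. h j y = None) then Some y else None)"
  by (induction js) (auto simp: pprod_def dOne_def dcompl_def map_comp_def split: option.splits)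

lemma dpi_apply:
  assumes pp: "\<forall>j<length ts. pperm d (ts!j)" and i: "i < length ts"
  shows "(ts!i \<circ>\<^sub>m dpi d ts i) x = (if x \<in> excl_part ts i then (ts!i) x else None)"
proof (cases "(ts!i) x")
  case None thus ?thesis by (simp add: dpi_def Let_def map_comp_def)
next
  case (Some y)
  define js where "js = filter (\<lambda>j. j \<noteq> i) [0..<length ts]"
  have js: "set js = {j. j < length ts \<and> j \<noteq> i}" by (auto simp: js_def)
  have inj: "\<And>j. j < length ts \<Longrightarrow> inj_on (ts!j) (dom (ts!j))" using pp pperm_inj by blast
  have y: "y \<in> ran (ts!i)" and x: "x \<in> dom (ts!i)" using Some by (auto simp: ran_def)
  have pv: "pinv (ts!i) y = Some x" using pinv_Some[OF inj[OF i]] Some by simp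
  have "dom (ts!i) \<subseteq> {1..d}" "ran (ts!i) \<subseteq> {1..d}" using pp i by (auto simp: pperm_def)
  hence yd: "y \<in> {1..d}" and xd: "x \<in> {1..d}" using y x by auto
  have pr: "pprod (dOne d) (map (\<lambda>j. dcompl d (ts!j \<circ>\<^sub>m pinv (ts!j))) js) y
      = (if \<forall>j\<in>set js. y \<notin> ran (ts!j) then Some y else None)"
    using yd by (auto simp: pprod_complements js comp_pinv_apply[OF inj])
  have right: "((ts!i \<circ>\<^sub>m pinv (ts!i)) \<circ>\<^sub>m pprod (dOne d) (map (\<lambda>j. dcompl d (ts!j \<circ>\<^sub>m pinv (ts!j))) js)) y
      = (if \<forall>j\<in>set js. y \<notin> ran (ts!j) then Some y else None)"
    by (cases "\<forall>j\<in>set js. y \<notin> ran (ts!j)") (simp_all add: pr comp_pinv_apply[OF inj[OF i]] y)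
  have pl: "pprod (dOne d) (map (\<lambda>j. dcompl d (pinv (ts!j) \<circ>\<^sub>m ts!j)) js) x
      = (if \<forall>j\<in>set js. x \<notin> dom (ts!j) then Some x else None)"
    using xd by (auto simp: pprod_complements js pinv_comp_apply[OF inj])
  have left: "((pinv (ts!i) \<circ>\<^sub>m ts!i) \<circ>\<^sub>m pprod (dOne d) (map (\<lambda>j. dcompl d (pinv (ts!j) \<circ>\<^sub>m ts!j)) js)) x
      = (if \<forall>j\<in>set js. x \<notin> dom (ts!j) then Some x else None)"
    by (cases "\<forall>j\<in>set js. x \<notin> dom (ts!j)") (simp_all add: pl pinv_comp_apply[OF inj[OF i]] x)
  have "dpi d ts i x = (if x \<in> excl_part ts i then Some x else None)"
    unfolding dpi_def Let_def js_def[symmetric] using Some pv right left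
    by (auto simp: excl_part_def js x map_comp_def split: if_splits)
  thus ?thesis using Some by simp
qed

lemma dpi_sum_on_excl:
  assumes "\<forall>j<length ts. pperm d (ts!j)" "i < length ts" "x \<in> excl_part ts i"
  shows "psum (map (\<lambda>i. ts!i \<circ>\<^sub>m dpi d ts i) [0..<length ts]) x = (ts!i) x"
proof -
  let ?us = "map (\<lambda>i. ts!i \<circ>\<^sub>m dpi d ts i) [0..<length ts]"
  have "\<forall>j<length ts. j \<noteq> i \<longrightarrow> x \<notin> excl_part ts j"
    using assms(2,3) by (auto simp: excl_part_def)
  hence "\<forall>j<length ?us. j \<noteq> i \<longrightarrow> (?us ! j) x = None"
    using dpi_apply[OF assms(1)] by simp
  hence "psum ?us x = (?us ! i) x" using assms(2) by (intro psum_unique) auto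
  moreover have "(ts!i \<circ>\<^sub>m dpi d ts i) x = (ts!i) x"
    using dpi_apply[OF assms(1,2)] assms(3) by simp
  ultimately show ?thesis using assms(2) by simp
qed

lemma dpi_sum_off_excl:
  assumes "\<forall>j<length ts. pperm d (ts!j)" "\<forall>i<length ts. x \<notin> excl_part ts i"
  shows "psum (map (\<lambda>i. ts!i \<circ>\<^sub>m dpi d ts i) [0..<length ts]) x = None"
  using dpi_apply[OF assms(1)] assms(2) by (auto simp: psum_None)
section \<open>The combinatorial core\<close>

text \<open>Abstract setting on {1..d}: a approximates s, t_i = ts!i the pairwise orthogonal summands
  s_i, e_i the projections onto their domains, E the projection onto the domain of s and z the
  empty map. Every hypothesis says that an identity valid in the pseudogroup holds for the images
  up to c points (c = delta d); mu_i and mu_s are the measures of the domains. Only the indices in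
  I matter: the other summands are null and get mapped to z.\<close>
locale approx_decomposition =
  fixes d :: nat and ts :: "(nat \<rightharpoonup> nat) list" and a z E :: "nat \<rightharpoonup> nat"
    and e :: "nat \<Rightarrow> (nat \<rightharpoonup> nat)" and I :: "nat set"
    and c \<mu>s :: real and \<mu> :: "nat \<Rightarrow> real"
  assumes pperm_ts: "\<forall>j<length ts. pperm d (ts!j)"
    and pperm_a: "pperm d a" and pperm_z: "pperm d z" and pperm_E: "pperm d E"
    and pperm_e: "\<And>i. i \<in> I \<Longrightarrow> pperm d (e i)"
    and I_indices: "I \<subseteq> {..<length ts}"
    and null_summand: "\<And>i. i < length ts \<Longrightarrow> i \<notin> I \<Longrightarrow> ts!i = z"
    and summand_restrict: "\<And>i. i \<in> I \<Longrightarrow> real (card (disagr d (ts!i) (a \<circ>\<^sub>m e i))) \<le> c"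
    and summand_supp: "\<And>i. i \<in> I \<Longrightarrow> real (card (disagr d (ts!i) (ts!i \<circ>\<^sub>m e i))) \<le> c"
    and e_idem: "\<And>i. i \<in> I \<Longrightarrow> real (card (disagr d (e i) (e i \<circ>\<^sub>m e i))) \<le> c"
    and e_below_E: "\<And>i. i \<in> I \<Longrightarrow> real (card (disagr d (e i) (E \<circ>\<^sub>m e i))) \<le> c"
    and e_trace: "\<And>i. i \<in> I \<Longrightarrow> real (card (fixed d (e i))) \<ge> \<mu> i * d - c"
    and e_orth: "\<And>i j. i \<in> I \<Longrightarrow> j \<in> I \<Longrightarrow> i \<noteq> j \<Longrightarrow> real (card (disagr d z (e i \<circ>\<^sub>m e j))) \<le> c"
    and z_idem: "real (card (disagr d z (z \<circ>\<^sub>m z))) \<le> c"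
    and z_trace: "real (card (fixed d z)) \<le> c"
    and a_supp: "real (card (disagr d a (a \<circ>\<^sub>m E))) \<le> c"
    and E_idem: "real (card (disagr d E (E \<circ>\<^sub>m E))) \<le> c"
    and E_trace: "real (card (fixed d E)) \<le> \<mu>s * d + c"
    and covered: "\<mu>s \<le> (\<Sum>i\<in>I. \<mu> i)"
begin

lemma finite_I: "finite I"
  using I_indices finite_subset by blast

lemma c_nonneg: "0 \<le> c"
  using z_trace of_nat_0_le_iff order_trans by blast

lemma pperm_summand: "i \<in> I \<Longrightarrow> pperm d (ts!i)"
  using pperm_ts I_indices by auto

lemma summand_dom: "i \<in> I \<Longrightarrow> dom (ts!i) \<subseteq> {1..d}"
  using pperm_dom[OF pperm_summand] .

text \<open>z is almost idempotent with almost no fixed points, so it is defined at few points.\<close>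
lemma card_dom_z: "real (card (dom z)) \<le> 2 * c"
proof -
  have "real (card (dom z)) \<le> real (card (fixed d z \<union> disagr d z (z \<circ>\<^sub>m z)))"
    using dom_subset_fixed_disagr[OF pperm_z] by (intro card_mono_real) auto
  also have "\<dots> \<le> 2 * c" using card_Un_real z_trace z_idem by (smt (verit))
  finally show ?thesis .
qed

lemma card_ran_z: "real (card (ran z)) \<le> 2 * c"
  using card_ran_le_card_dom[OF finite_dom_pperm[OF pperm_z]] card_dom_z
  by (meson of_nat_le_iff order_trans)

definition defect :: "nat \<Rightarrow> nat set" where
  "defect i = disagr d (ts!i) (ts!i \<circ>\<^sub>m e i) \<union> disagr d (ts!i) (a \<circ>\<^sub>m e i)"

lemma card_defect: "i \<in> I \<Longrightarrow> real (card (defect i)) \<le> 2 * c"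
  unfolding defect_def using card_Un_real summand_supp summand_restrict by (smt (verit))

lemma agree_outside_defect:
  assumes i: "i \<in> I" and x: "x \<in> dom (ts!i)" and nd: "x \<notin> defect i"
  shows "a x = (ts!i) x"
proof -
  have "x \<in> fixed d (e i)" using fixed_of_agree_comp[OF pperm_summand[OF i] x] nd
    unfolding defect_def by blast
  hence "(a \<circ>\<^sub>m e i) x = a x" by (simp add: fixed_iff)
  thus ?thesis using nd x summand_dom[OF i] by (auto simp: defect_def disagr_iff)
qed

definition hits_null :: "nat \<Rightarrow> nat set" where
  "hits_null i = {x \<in> dom (ts!i). the ((ts!i) x) \<in> ran z}"

lemma card_hits_null: "i \<in> I \<Longrightarrow> real (card (hits_null i)) \<le> 2 * c"
proof -
  assume i: "i \<in> I"
  have "inj_on (\<lambda>x. the ((ts!i) x)) (hits_null i)"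
    using pperm_inj[OF pperm_summand[OF i]] unfolding hits_null_def inj_on_def
    by (metis (no_types, lifting) domIff mem_Collect_eq option.expand)
  moreover have "(\<lambda>x. the ((ts!i) x)) ` hits_null i \<subseteq> ran z" unfolding hits_null_def by auto
  ultimately have "card (hits_null i) \<le> card (ran z)"
    using card_inj_on_le finite_ran[OF finite_dom_pperm[OF pperm_z]] by blast
  thus ?thesis using card_ran_z by linarith
qed

definition dom_overlap :: "nat \<Rightarrow> nat \<Rightarrow> nat set" where
  "dom_overlap i j = dom (ts!i) \<inter> dom (ts!j)"

definition ran_overlap :: "nat \<Rightarrow> nat \<Rightarrow> nat set" where
  "ran_overlap i j = {x \<in> dom (ts!i). the ((ts!i) x) \<in> ran (ts!j)}"

lemma card_dom_overlap:
  assumes i: "i \<in> I" and j: "j \<in> I" and ij: "i \<noteq> j"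
  shows "real (card (dom_overlap i j)) \<le> 5 * c"
proof -
  let ?Bi = "disagr d (ts!i) (ts!i \<circ>\<^sub>m e i)" and ?Bj = "disagr d (ts!j) (ts!j \<circ>\<^sub>m e j)"
  have "dom_overlap i j \<subseteq> ?Bi \<union> ?Bj \<union> (fixed d (e i) \<inter> fixed d (e j))"
    using fixed_of_agree_comp[OF pperm_summand[OF i]] fixed_of_agree_comp[OF pperm_summand[OF j]]
    unfolding dom_overlap_def by blast
  also have "\<dots> \<subseteq> ?Bi \<union> ?Bj \<union> (disagr d z (e i \<circ>\<^sub>m e j) \<union> dom z)"
    using fixed_inter_subset by blast
  finally have "real (card (dom_overlap i j))
      \<le> real (card ?Bi) + real (card ?Bj) + (real (card (disagr d z (e i \<circ>\<^sub>m e j))) + real (card (dom z)))"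
    by (smt (verit) card_Un_real card_mono_real finite_dom_pperm pperm_z finite_UnI finite_disagr)
  thus ?thesis using summand_supp[OF i] summand_supp[OF j] e_orth[OF i j ij] card_dom_z by linarith
qed

text \<open>If t_i x lies in the range of t_j, then x is a defect of t_i, an overlap point, or
  (as a agrees with both t_i and t_j off their defects and is injective) the image of a defect
  of t_j under t_i^{-1} t_j.\<close>
lemma ran_overlap_subset:
  assumes i: "i \<in> I" and j: "j \<in> I"
  shows "ran_overlap i j \<subseteq> defect i \<union> dom_overlap i j
           \<union> (\<lambda>x'. the (pinv (ts!i) (the ((ts!j) x')))) ` defect j"
proof
  fix x assume x: "x \<in> ran_overlap i j"
  show "x \<in> defect i \<union> dom_overlap i j \<union> (\<lambda>x'. the (pinv (ts!i) (the ((ts!j) x')))) ` defect j"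
  proof (cases "x \<in> defect i \<union> dom_overlap i j")
    case False
    obtain y where y: "(ts!i) x = Some y" and "y \<in> ran (ts!j)"
      using x unfolding ran_overlap_def by auto
    then obtain x' where x': "(ts!j) x' = Some y" by (auto simp: ran_def)
    have "x \<in> dom (ts!i)" using y by blast
    hence ax: "a x = Some y" using agree_outside_defect[OF i] False y by auto
    have "pinv (ts!i) y = Some x" using y pinv_Some[OF pperm_inj[OF pperm_summand[OF i]]] by blast
    hence "the (pinv (ts!i) (the ((ts!j) x'))) = x" using x' by simp
    moreover have "x' \<in> defect j"
    proof (rule ccontr)
      assume "x' \<notin> defect j"
      hence "a x' = Some y" using agree_outside_defect[OF j] x' by (metis domI)
      hence "x' = x" using inj_on_dom_eq[OF pperm_inj[OF pperm_a]] ax by metis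
      thus False using False x' y unfolding dom_overlap_def by blast
    qed
    ultimately show ?thesis by blast
  qed blast
qed

lemma card_ran_overlap:
  assumes i: "i \<in> I" and j: "j \<in> I" and ij: "i \<noteq> j"
  shows "real (card (ran_overlap i j)) \<le> 9 * c"
proof -
  define h where "h = (\<lambda>x'. the (pinv (ts!i) (the ((ts!j) x'))))"
  have "finite (defect i \<union> dom_overlap i j \<union> h ` defect j)"
    using finite_dom_pperm[OF pperm_summand[OF i]] by (auto simp: defect_def dom_overlap_def)
  hence "real (card (ran_overlap i j))
      \<le> real (card (defect i)) + real (card (dom_overlap i j)) + real (card (h ` defect j))"
    using ran_overlap_subset[OF i j, folded h_def] by (smt (verit) card_Un_real card_mono_real)
  moreover have "card (h ` defect j) \<le> card (defect j)"
    by (rule card_image_le) (simp add: defect_def)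
  ultimately show ?thesis
    using card_defect[OF i] card_defect[OF j] card_dom_overlap[OF i j ij] by linarith
qed

text \<open>Since E has about mu_s d fixed
  points, each e_i has about mu_i d fixed points, almost all fixed by E, and the e_i are almost
  orthogonal, inclusion-exclusion (Bonferroni) bounds the uncovered part.\<close>
definition uncovered :: "nat set" where
  "uncovered = fixed d E - (\<Union>i\<in>I. dom (e i))"

lemma card_fixed_below_E:
  assumes i: "i \<in> I"
  shows "real (card (fixed d (e i) \<inter> fixed d E)) \<ge> \<mu> i * d - 2 * c"
proof -
  have "fixed d (e i) \<subseteq> (fixed d (e i) \<inter> fixed d E) \<union> disagr d (e i) (E \<circ>\<^sub>m e i)"
    by (auto simp: fixed_iff disagr_iff)
  hence "real (card (fixed d (e i)))
      \<le> real (card (fixed d (e i) \<inter> fixed d E)) + real (card (disagr d (e i) (E \<circ>\<^sub>m e i)))"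
    by (smt (verit) card_Un_real card_mono_real finite_UnI finite_Int
        finite_fixed finite_disagr)
  thus ?thesis using e_below_E[OF i] e_trace[OF i] by linarith
qed

text \<open>Distinct e_i, e_j have few common fixed points, since e_i e_j is close to z.\<close>
lemma card_fixed_pair:
  assumes i: "i \<in> I" and j: "j \<in> I" and ij: "i \<noteq> j"
  shows "real (card (fixed d (e i) \<inter> fixed d (e j))) \<le> 3 * c"
proof -
  have "real (card (fixed d (e i) \<inter> fixed d (e j)))
      \<le> real (card (disagr d z (e i \<circ>\<^sub>m e j))) + real (card (dom z))"
    using fixed_inter_subset
    by (smt (verit) card_Un_real card_mono_real finite_UnI finite_dom_pperm[OF pperm_z]
        finite_disagr)
  thus ?thesis using e_orth[OF i j ij] card_dom_z by linarith
qed

lemma card_uncovered: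
  "real (card uncovered) \<le> c + real (card I) * (2 * c) + real (card I) * (real (card I) * (3 * c))"
proof -
  define A where "A = (\<lambda>i. fixed d (e i) \<inter> fixed d E)"
  have "real (card (A i \<inter> A j)) \<le> 3 * c" if "i \<in> I" "j \<in> I" "i \<noteq> j" for i j
  proof -
    have "A i \<inter> A j \<subseteq> fixed d (e i) \<inter> fixed d (e j)" unfolding A_def by blast
    hence "real (card (A i \<inter> A j)) \<le> real (card (fixed d (e i) \<inter> fixed d (e j)))"
      by (intro card_mono_real) simp_all
    thus ?thesis using card_fixed_pair[OF that] by linarith
  qed
  hence bonf: "(\<Sum>i\<in>I. real (card (A i)))
      \<le> real (card (\<Union>i\<in>I. A i)) + real (card I) * (real (card I) * (3 * c))"
    using c_nonneg by (intro sum_card_le_card_Union_pairwise[OF finite_I]) (simp_all add: A_def)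
  have union: "real (card (\<Union>i\<in>I. A i)) \<le> real (card (fixed d E \<inter> (\<Union>i\<in>I. dom (e i))))"
    unfolding A_def by (intro card_mono_real) (auto simp: fixed_def)
  have "\<mu>s * d - real (card I) * (2 * c) \<le> (\<Sum>i\<in>I. \<mu> i * d - 2 * c)"
    using covered by (simp add: sum_subtractf sum_distrib_right[symmetric] mult_right_mono)
  also have "\<dots> \<le> (\<Sum>i\<in>I. real (card (A i)))"
    unfolding A_def using card_fixed_below_E by (intro sum_mono) auto
  also have "\<dots> \<le> real (card (fixed d E \<inter> (\<Union>i\<in>I. dom (e i)))) + real (card I) * (real (card I) * (3 * c))"
    using bonf union by linarith
  finally have covered_part:
    "\<mu>s * d - real (card I) * (2 * c) - real (card I) * (real (card I) * (3 * c))
      \<le> real (card (fixed d E \<inter> (\<Union>i\<in>I. dom (e i))))" by simp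
  have "real (card (fixed d E)) = real (card uncovered) + real (card (fixed d E \<inter> (\<Union>i\<in>I. dom (e i))))"
    unfolding uncovered_def
    using card_Diff_subset_Int[of "fixed d E" "\<Union>i\<in>I. dom (e i)"]
      card_mono[of "fixed d E" "fixed d E \<inter> (\<Union>i\<in>I. dom (e i))"] by (simp add: of_nat_diff)
  thus ?thesis using E_trace covered_part by linarith
qed

text \<open>The exceptional set collects all the small sets above; off it, a agrees with
  the sum of the t_i pi_i.\<close>
definition pairs :: "(nat \<times> nat) set" where
  "pairs = {(i, j). i \<in> I \<and> j \<in> I \<and> i \<noteq> j}"

definition exceptional :: "nat set" where
  "exceptional =
     (\<Union>i\<in>I. defect i \<union> hits_null i \<union> disagr d (e i) (e i \<circ>\<^sub>m e i))
     \<union> (\<Union>(i, j)\<in>pairs. dom_overlap i j \<union> ran_overlap i j)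
     \<union> dom z \<union> disagr d a (a \<circ>\<^sub>m E) \<union> disagr d E (E \<circ>\<^sub>m E) \<union> uncovered"

text \<open>A point alone in the domain of t_i: there the sum equals t_i, which agrees with a
  off the defects (or t_i = z when the summand is null).\<close>
lemma exceptional_on_excl_part:
  assumes i: "i < length ts" and x: "x \<in> excl_part ts i" and ne: "a x \<noteq> (ts!i) x"
  shows "x \<in> exceptional"
proof (cases "i \<in> I")
  case True
  have "x \<in> dom (ts!i)" using x by (simp add: excl_part_def)
  hence "x \<in> defect i" using agree_outside_defect[OF True] ne by blast
  thus ?thesis using True unfolding exceptional_def by blast
next
  case False
  thus ?thesis using null_summand[OF i] x unfolding exceptional_def excl_part_def by auto
qed

lemma exceptional_on_collision:
  assumes i: "i \<in> I" and x: "x \<in> dom (ts!i)" and nx: "x \<notin> excl_part ts i"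
  shows "x \<in> exceptional"
proof -
  obtain j where j: "j < length ts" "j \<noteq> i" and hit: "x \<in> dom (ts!j) \<or> the ((ts!i) x) \<in> ran (ts!j)"
    using x nx unfolding excl_part_def by auto
  show ?thesis
  proof (cases "j \<in> I")
    case True
    hence "(i, j) \<in> pairs" using i j unfolding pairs_def by auto
    moreover have "x \<in> dom_overlap i j \<union> ran_overlap i j"
      using x hit unfolding dom_overlap_def ran_overlap_def by auto
    ultimately show ?thesis unfolding exceptional_def by blast
  next
    case False
    hence "x \<in> dom z \<or> x \<in> hits_null i"
      using null_summand[OF j(1) False] x hit unfolding hits_null_def by auto
    thus ?thesis using i unfolding exceptional_def by blast
  qed
qed

text \<open>A point where a is defined but no non-null summand is: by a ~ a E it is (almost) a fixed
  point of E, hence (almost) covered by some e_i, which forces t_i to be defined there.\<close>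
lemma exceptional_off_summands:
  assumes xd: "x \<in> {1..d}" and ax: "a x \<noteq> None" and none: "\<forall>i\<in>I. (ts!i) x = None"
  shows "x \<in> exceptional"
proof (cases "x \<in> disagr d a (a \<circ>\<^sub>m E)")
  case False
  hence "(a \<circ>\<^sub>m E) x = a x" using xd by (simp add: disagr_iff)
  hence "x \<in> dom E" using ax by (cases "E x") auto
  hence "x \<in> fixed d E \<or> x \<in> disagr d E (E \<circ>\<^sub>m E)" using dom_subset_fixed_disagr[OF pperm_E] by blast
  moreover have "x \<in> exceptional" if fE: "x \<in> fixed d E"
  proof (cases "\<exists>i\<in>I. x \<in> dom (e i)")
    case True
    then obtain i where i: "i \<in> I" "x \<in> dom (e i)" by auto
    hence "x \<in> fixed d (e i) \<or> x \<in> disagr d (e i) (e i \<circ>\<^sub>m e i)"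
      using dom_subset_fixed_disagr[OF pperm_e] by blast
    moreover have "x \<in> defect i" if "x \<in> fixed d (e i)"
      using that none i ax xd by (auto simp: defect_def disagr_iff fixed_iff)
    ultimately show ?thesis using i unfolding exceptional_def by blast
  next
    case False
    thus ?thesis using fE unfolding exceptional_def uncovered_def by blast
  qed
  ultimately show ?thesis unfolding exceptional_def by blast
qed (auto simp: exceptional_def)

lemma disagr_subset_exceptional:
  "disagr d a (psum (map (\<lambda>i. ts!i \<circ>\<^sub>m dpi d ts i) [0..<length ts])) \<subseteq> exceptional"
proof
  fix x assume "x \<in> disagr d a (psum (map (\<lambda>i. ts!i \<circ>\<^sub>m dpi d ts i) [0..<length ts]))"
  hence xd: "x \<in> {1..d}" and ne: "a x \<noteq> psum (map (\<lambda>i. ts!i \<circ>\<^sub>m dpi d ts i) [0..<length ts]) x"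
    by (auto simp: disagr_iff)
  show "x \<in> exceptional"
  proof (cases "\<exists>i<length ts. x \<in> excl_part ts i")
    case True
    then obtain i where "i < length ts" "x \<in> excl_part ts i" by blast
    thus ?thesis using exceptional_on_excl_part ne dpi_sum_on_excl[OF pperm_ts] by metis
  next
    case False
    hence ax: "a x \<noteq> None" using ne dpi_sum_off_excl[OF pperm_ts] by auto
    show ?thesis
    proof (cases "\<exists>i\<in>I. x \<in> dom (ts!i)")
      case True
      then obtain i where "i \<in> I" "x \<in> dom (ts!i)" by blast
      thus ?thesis using False I_indices exceptional_on_collision by blast
    next
      case False
      thus ?thesis using exceptional_off_summands[OF xd ax] by blast
    qed
  qed
qed

lemma finite_pairs: "finite pairs" and card_pairs: "card pairs \<le> card I * card I"
proof -
  have "pairs \<subseteq> I \<times> I" unfolding pairs_def by auto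
  thus "finite pairs" "card pairs \<le> card I * card I"
    using finite_I card_mono[of "I \<times> I" pairs] finite_subset by (auto simp: card_cartesian_product)
qed

lemma finite_exceptional: "finite exceptional"
proof -
  have "finite (hits_null i)" "finite (dom_overlap i j)" "finite (ran_overlap i j)" if "i \<in> I" for i j
    using finite_dom_pperm[OF pperm_summand[OF that]]
    unfolding hits_null_def dom_overlap_def ran_overlap_def by (auto intro: finite_subset)
  thus ?thesis
    unfolding exceptional_def uncovered_def defect_def
    using finite_I finite_pairs finite_dom_pperm[OF pperm_z] by (auto simp: pairs_def)
qed

lemma card_exceptional: "real (card exceptional) \<le> 17 * (real (card I) + 1)^2 * c"
proof -
  define K where "K = real (card I)"
  have per_index:
    "real (card (\<Union>i\<in>I. defect i \<union> hits_null i \<union> disagr d (e i) (e i \<circ>\<^sub>m e i))) \<le> K * (2 * c + 2 * c + c)"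
    unfolding K_def using finite_I
    by (rule card_UN_real) (intro card_Un_real_le card_defect card_hits_null e_idem; assumption)
  have "real (card (\<Union>p\<in>pairs. dom_overlap (fst p) (snd p) \<union> ran_overlap (fst p) (snd p)))
      \<le> real (card pairs) * (5 * c + 9 * c)"
    using finite_pairs
  proof (rule card_UN_real)
    fix p assume "p \<in> pairs"
    then obtain i j where "p = (i, j)" "i \<in> I" "j \<in> I" "i \<noteq> j" unfolding pairs_def by auto
    thus "real (card (dom_overlap (fst p) (snd p) \<union> ran_overlap (fst p) (snd p))) \<le> 5 * c + 9 * c"
      using card_Un_real_le[OF card_dom_overlap[of i j] card_ran_overlap[of i j]] by simp
  qed
  also have "\<dots> \<le> K * K * (5 * c + 9 * c)"
  proof (rule mult_right_mono)
    show "real (card pairs) \<le> K * K" unfolding K_def using card_pairs by (metis of_nat_mono of_nat_mult)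
  qed (use c_nonneg in simp)
  finally have per_pair: "real (card (\<Union>(i, j)\<in>pairs. dom_overlap i j \<union> ran_overlap i j))
      \<le> K * K * (5 * c + 9 * c)"
    by (simp add: case_prod_beta')
  have "real (card exceptional) \<le> K * (2 * c + 2 * c + c) + K * K * (5 * c + 9 * c) + 2 * c + c + c
      + (c + K * (2 * c) + K * (K * (3 * c)))"
    unfolding exceptional_def
    by (intro card_Un_real_le per_index per_pair card_dom_z a_supp E_idem card_uncovered[folded K_def])
  also have "\<dots> \<le> 17 * (K + 1)^2 * c"
    using c_nonneg unfolding K_def by (simp add: power2_eq_square algebra_simps mult_right_mono)
  finally show ?thesis unfolding K_def .
qed

theorem card_disagr_decomposition:
  "real (card (disagr d a (psum (map (\<lambda>i. ts!i \<circ>\<^sub>m dpi d ts i) [0..<length ts]))))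
     \<le> 17 * (real (card I) + 1)^2 * c"
  using card_mono_real[OF finite_exceptional disagr_subset_exceptional] card_exceptional by linarith

end
section \<open>Elements of the full pseudogroup\<close>

lemma space_std: "std_prob_space M \<Longrightarrow> space M = UNIV"
  unfolding std_prob_space_def using sets_eq_imp_space_eq[of M borel] by simp

lemma pelem_dom: "pelem M R X \<Longrightarrow> dom X \<in> sets M"
  by (simp add: pelem_def partial_borel_bij_def)

lemma pelem_inj: "pelem M R X \<Longrightarrow> inj_on X (dom X)"
  by (simp add: pelem_def partial_borel_bij_def)

lemma ran_restrict_map_pinv:
  assumes inj: "inj_on X (dom X)"
  shows "ran (X |` A) = ran X \<inter> (the \<circ> pinv X) -` A"
proof (rule set_eqI)
  fix y
  show "y \<in> ran (X |` A) \<longleftrightarrow> y \<in> ran X \<inter> (the \<circ> pinv X) -` A"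
  proof
    assume "y \<in> ran (X |` A)"
    then obtain x where x: "x \<in> A" "X x = Some y" using ran_restrictD by metis
    hence "pinv X y = Some x" using pinv_Some[OF inj] by blast
    moreover have "y \<in> ran X" using x(2) by (rule ranI)
    ultimately show "y \<in> ran X \<inter> (the \<circ> pinv X) -` A" using x(1) by simp
  next
    assume y: "y \<in> ran X \<inter> (the \<circ> pinv X) -` A"
    then obtain x where x: "X x = Some y" by (auto simp: ran_def)
    hence "pinv X y = Some x" using pinv_Some[OF inj] by blast
    hence "x \<in> A" using y by simp
    hence "(X |` A) x = Some y" using x by simp
    thus "y \<in> ran (X |` A)" by (rule ranI)
  qed
qed

lemma pelem_restrict:
  assumes std: "std_prob_space M" and pmp: "pmp_cber M R" and X: "pelem M R X"
    and A: "A \<in> sets M"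
  shows "pelem M R (X |` A)"
proof -
  have sp: "space M = UNIV" using space_std[OF std] .
  have pb: "partial_borel_bij M R X" using X by (simp add: pelem_def)
  have inj: "inj_on X (dom X)" and dX: "dom X \<in> sets M" and rX: "ran X \<in> sets M"
    and m1: "(the \<circ> X) \<in> measurable (restrict_space M (dom X)) M"
    and m2: "(the \<circ> pinv X) \<in> measurable (restrict_space M (ran X)) M"
    using pb by (auto simp: partial_borel_bij_def)
  have "ran X \<inter> (the \<circ> pinv X) -` A \<in> sets (restrict_space M (ran X))"
    using measurable_sets[OF m2 A] by (simp add: space_restrict_space sp Int_commute)
  hence rA: "ran (X |` A) \<in> sets M"
    using rX by (simp add: sets_restrict_space_iff ran_restrict_map_pinv[OF inj])
  have "(the \<circ> (X |` A)) \<in> measurable (restrict_space M (dom (X |` A))) M"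
    using measurable_restrict_mono[OF m1, of "dom (X |` A)"]
    by (subst measurable_cong[where g="the \<circ> X"]) (auto simp: space_restrict_space)
  moreover have "(the \<circ> pinv (X |` A)) \<in> measurable (restrict_space M (ran (X |` A))) M"
  proof -
    have "ran (X |` A) \<subseteq> ran X" unfolding ran_restrict_map_pinv[OF inj] by blast
    hence "(the \<circ> pinv X) \<in> measurable (restrict_space M (ran (X |` A))) M"
      by (rule measurable_restrict_mono[OF m2])
    thus ?thesis
      by (subst measurable_cong[where g="the \<circ> pinv X"])
        (simp_all add: space_restrict_space pinv_restrict_map[OF inj])
  qed
  moreover have "dom (X |` A) \<in> sets M" using dX A by simp
  moreover have "\<forall>x y. (X |` A) x = Some y \<longrightarrow> (x, y) \<in> R"
    using pb by (auto simp: partial_borel_bij_def restrict_map_def)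
  ultimately have "partial_borel_bij M R (X |` A)"
    unfolding partial_borel_bij_def using rA inj_on_restrict_map[OF inj] by blast
  thus ?thesis using pmp by (simp add: pelem_def pmp_cber_def)
qed

lemma pelem_pone:
  assumes std: "std_prob_space M" and pmp: "pmp_cber M R"
  shows "pelem M R pone"
proof -
  have U: "UNIV \<in> sets M" using sets.top[of M] space_std[OF std] by simp
  have Rr: "\<forall>x y. pone x = Some y \<longrightarrow> (x, y) \<in> R"
    using pmp by (auto simp: pmp_cber_def pone_def equiv_def refl_on_def)
  have i: "the \<circ> pone = id" by (rule ext) (simp add: pone_def)
  have d: "dom pone = UNIV" and r: "ran pone = UNIV" by (auto simp: pone_def ran_def)
  have "partial_borel_bij M R pone"
    unfolding partial_borel_bij_def d r pinv_pone i
    using U Rr measurable_restrict_space1[OF measurable_ident] inj_pone[simplified] by simp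
  thus ?thesis using pmp by (simp add: pelem_def pmp_cber_def)
qed

lemma pelem_proj:
  "std_prob_space M \<Longrightarrow> pmp_cber M R \<Longrightarrow> A \<in> sets M \<Longrightarrow> pelem M R (pone |` A)"
  using pelem_restrict pelem_pone by blast

lemma pelem_empty:
  assumes "std_prob_space M" "pmp_cber M R"
  shows "pelem M R Map.empty"
  using pelem_proj[OF assms, of "{}"] by simp

section \<open>The sets F_pm^n and Sigma F_pm^n\<close>

lemma Fpm_inj:
  assumes "\<forall>t\<in>F. inj_on t (dom t)" "u \<in> Fpm F"
  shows "inj_on u (dom u)"
  using assms pinv_inj inj_pone unfolding Fpm_def by blast

lemma Fpm_pinv:
  assumes F: "\<forall>t\<in>F. inj_on t (dom t)" and u: "u \<in> Fpm F"
  shows "pinv u \<in> Fpm F"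
  using u pinv_pinv F pinv_pone unfolding Fpm_def by auto

text \<open>Padding a word with 1's: F_pm^n is contained in F_pm^m for n \<le> m.\<close>
lemma ppow_mono:
  assumes "n \<le> m"
  shows "ppow (Fpm F) n \<subseteq> ppow (Fpm F) m"
proof
  fix t assume "t \<in> ppow (Fpm F) n"
  then obtain us where us: "t = pprod pone us" "length us = n" "set us \<subseteq> Fpm F"
    by (auto simp: ppow_def)
  let ?vs = "us @ replicate (m - n) pone"
  have "pprod pone ?vs = t" using us by (simp add: pprod_append pprod_replicate_pone)
  moreover have "length ?vs = m" "set ?vs \<subseteq> Fpm F" using us assms by (auto simp: Fpm_def)
  ultimately show "t \<in> ppow (Fpm F) m" unfolding ppow_def by blast
qed

lemma ppow_proj:
  assumes F: "\<forall>t\<in>F. inj_on t (dom t)" and t: "t \<in> ppow (Fpm F) n"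
  shows "pone |` dom t \<in> ppow (Fpm F) (2 * n)"
proof -
  obtain us where us: "t = pprod pone us" "length us = n" "set us \<subseteq> Fpm F"
    using t by (auto simp: ppow_def)
  let ?vs = "rev (map pinv us) @ us"
  have "\<forall>u\<in>set us. inj_on u (dom u)" using us Fpm_inj[OF F] by blast
  hence "pone |` dom t = pprod pone ?vs" unfolding us(1) pprod_append by (rule pprod_rev_pinv[symmetric])
  moreover have "length ?vs = 2 * n" "set ?vs \<subseteq> Fpm F" using us Fpm_pinv[OF F] by auto
  ultimately show ?thesis unfolding ppow_def by blast
qed

lemma card_Fpm:
  fixes F :: "('a \<rightharpoonup> 'a) set"
  shows "finite F \<Longrightarrow> card (Fpm F) \<le> 2 * card F + 1"
proof -
  assume f: "finite F"
  have "card (Fpm F) \<le> card (F \<union> pinv ` F) + card {pone :: 'a \<rightharpoonup> 'a}"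
    unfolding Fpm_def by (rule card_Un_le)
  also have "\<dots> \<le> card F + card (pinv ` F) + 1" using card_Un_le[of F "pinv ` F"] by simp
  also have "\<dots> \<le> 2 * card F + 1" using card_image_le[OF f, of pinv] by simp
  finally show ?thesis .
qed

lemma finite_ppow: "finite F \<Longrightarrow> finite (ppow (Fpm F) n)"
  and card_ppow: "finite F \<Longrightarrow> card (ppow (Fpm F) n) \<le> (2 * card F + 1) ^ n"
proof -
  assume fF: "finite F"
  hence fin: "finite (Fpm F)" by (simp add: Fpm_def)
  have img: "ppow (Fpm F) n = pprod pone ` {us. set us \<subseteq> Fpm F \<and> length us = n}"
    unfolding ppow_def by blast
  show "finite (ppow (Fpm F) n)" unfolding img by (rule finite_imageI[OF finite_lists_length_eq[OF fin]])
  have "card (ppow (Fpm F) n) \<le> card {us. set us \<subseteq> Fpm F \<and> length us = n}"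
    unfolding img by (rule card_image_le[OF finite_lists_length_eq[OF fin]])
  also have "\<dots> = card (Fpm F) ^ n" by (rule card_lists_length_eq[OF fin])
  also have "\<dots> \<le> (2 * card F + 1) ^ n" by (rule power_mono[OF card_Fpm[OF fF]]) simp
  finally show "card (ppow (Fpm F) n) \<le> (2 * card F + 1) ^ n" .
qed

lemma peq_refl: "peq M X X"
  by (simp add: peq_def)

lemma peq_trans: "peq M X Y \<Longrightarrow> peq M Y Z \<Longrightarrow> peq M X Z"
  unfolding peq_def by (auto elim: AE_mp)

lemma peq_psum_dom:
  assumes "peq M X (psum ts)"
  shows "AE x in M. x \<in> dom X \<longleftrightarrow> (\<exists>t\<in>set ts. x \<in> dom t)"
  using assms unfolding peq_def
proof (rule eventually_mono)
  fix x assume "X x = psum ts x"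
  hence "x \<in> dom X \<longleftrightarrow> x \<in> dom (psum ts)" by (simp add: domIff)
  thus "x \<in> dom X \<longleftrightarrow> (\<exists>t\<in>set ts. x \<in> dom t)" by (simp add: dom_psum)
qed

lemma SigmaP_mono: "G \<subseteq> H \<Longrightarrow> SigmaP M R G \<subseteq> SigmaP M R H"
  unfolding SigmaP_def by blast

lemma SigmaP_peq: "pelem M R Y \<Longrightarrow> X \<in> SigmaP M R G \<Longrightarrow> peq M Y X \<Longrightarrow> Y \<in> SigmaP M R G"
  unfolding SigmaP_def using peq_trans by blast

lemma SigmaP_pelem: "X \<in> SigmaP M R G \<Longrightarrow> pelem M R X"
  unfolding SigmaP_def by blast

lemma SigmaP_empty: "pelem M R Map.empty \<Longrightarrow> Map.empty \<in> SigmaP M R G"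
  unfolding SigmaP_def by (auto simp: pw_orth_def psum_def peq_refl intro!: exI[of _ "[]"])

text \<open>If X is a sum of orthogonal words of length n, then 1_{dom X} is the sum of their
  domain projections, words of length 2n.\<close>
lemma SigmaP_proj:
  assumes std: "std_prob_space M" and pmp: "pmp_cber M R" and F: "\<forall>t\<in>F. inj_on t (dom t)"
    and X: "X \<in> SigmaP M R (ppow (Fpm F) n)"
  shows "pone |` dom X \<in> SigmaP M R (ppow (Fpm F) (2 * n))"
proof -
  obtain ts where pX: "pelem M R X"
    and ts: "set ts \<subseteq> ppow (Fpm F) n" "pw_orth M ts" "peq M X (psum ts)"
    using X unfolding SigmaP_def by blast
  let ?ps = "map (\<lambda>t. pone |` dom t) ts"
  have "set ?ps \<subseteq> ppow (Fpm F) (2 * n)" using ts(1) ppow_proj[OF F] by auto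
  moreover have "pw_orth M ?ps" using ts(2) by (simp add: pw_orth_def orth_def)
  moreover have "peq M (pone |` dom X) (psum ?ps)"
    using peq_psum_dom[OF ts(3)] unfolding peq_def
  proof (rule eventually_mono)
    fix x assume "x \<in> dom X \<longleftrightarrow> (\<exists>t\<in>set ts. x \<in> dom t)"
    thus "(pone |` dom X) x = psum ?ps x" by (simp only: psum_projs) (simp add: pone_def)
  qed
  ultimately show ?thesis
    using pelem_proj[OF std pmp pelem_dom[OF pX]] unfolding SigmaP_def by blast
qed

section \<open>Counting the non-null summands\<close>

lemma nonnull_component:
  assumes X: "X \<in> SigmaP M R G" and nonnull: "\<not> (AE x in M. x \<notin> dom X)"
  shows "\<exists>g\<in>G. \<not> (AE x in M. x \<notin> dom g) \<and> (AE x in M. x \<in> dom g \<longrightarrow> x \<in> dom X)"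
proof -
  obtain ts where ts: "set ts \<subseteq> G" "peq M X (psum ts)"
    using X unfolding SigmaP_def by blast
  have eq: "AE x in M. x \<in> dom X \<longleftrightarrow> (\<exists>g\<in>set ts. x \<in> dom g)"
    using peq_psum_dom[OF ts(2)] .
  have "\<exists>g\<in>set ts. \<not> (AE x in M. x \<notin> dom g)"
  proof (rule ccontr)
    assume "\<not> ?thesis"
    hence "AE x in M. \<forall>g\<in>set ts. x \<notin> dom g" by (intro AE_finite_allI) auto
    hence "AE x in M. x \<notin> dom X" using eq by eventually_elim auto
    with nonnull show False by contradiction
  qed
  then obtain g where g: "g \<in> set ts" "\<not> (AE x in M. x \<notin> dom g)" by auto
  moreover have "AE x in M. x \<in> dom g \<longrightarrow> x \<in> dom X"
    using eq by eventually_elim (meson g(1))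
  ultimately show ?thesis using ts(1) by auto
qed

text \<open>Distinct orthogonal summands dominate distinct elements of G, so there are at most |G|
  non-null summands.\<close>
lemma card_nonnull_summands:
  assumes G: "finite G" and ss: "set ss \<subseteq> SigmaP M R G" and orth: "pw_orth M ss"
  shows "card {i. i < length ss \<and> dom (ss!i) \<notin> null_sets M} \<le> card G"
proof -
  define I where "I = {i. i < length ss \<and> dom (ss!i) \<notin> null_sets M}"
  have "\<forall>i\<in>I. \<exists>g\<in>G. \<not> (AE x in M. x \<notin> dom g) \<and> (AE x in M. x \<in> dom g \<longrightarrow> x \<in> dom (ss!i))"
  proof
    fix i assume i: "i \<in> I"
    hence si: "ss!i \<in> SigmaP M R G" using ss unfolding I_def by auto
    have "\<not> (AE x in M. x \<notin> dom (ss!i))"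
      using i AE_iff_null_sets[OF pelem_dom[OF SigmaP_pelem[OF si]]] unfolding I_def by blast
    thus "\<exists>g\<in>G. \<not> (AE x in M. x \<notin> dom g) \<and> (AE x in M. x \<in> dom g \<longrightarrow> x \<in> dom (ss!i))"
      by (rule nonnull_component[OF si])
  qed
  then obtain h where h: "\<And>i. i \<in> I \<Longrightarrow> h i \<in> G \<and> \<not> (AE x in M. x \<notin> dom (h i))
      \<and> (AE x in M. x \<in> dom (h i) \<longrightarrow> x \<in> dom (ss!i))"
    by metis
  have "inj_on h I"
  proof (rule inj_onI, rule ccontr)
    fix i j assume i: "i \<in> I" and j: "j \<in> I" and e: "h i = h j" and ij: "i \<noteq> j"
    have "dom (ss!i) \<inter> dom (ss!j) \<in> null_sets M"
      using orth i j ij unfolding pw_orth_def orth_def I_def by blast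
    hence "AE x in M. x \<notin> dom (ss!i) \<inter> dom (ss!j)" by (rule AE_not_in)
    moreover have "AE x in M. x \<in> dom (h i) \<longrightarrow> x \<in> dom (ss!i)" using h[OF i] by blast
    moreover have "AE x in M. x \<in> dom (h i) \<longrightarrow> x \<in> dom (ss!j)" using h[OF j] e by simp
    ultimately have "AE x in M. x \<notin> dom (h i)" by eventually_elim auto
    thus False using h[OF i] by simp
  qed
  hence "card I = card (h ` I)" by (simp add: card_image)
  also have "\<dots> \<le> card G" using h by (intro card_mono[OF G]) blast
  finally show ?thesis unfolding I_def .
qed
section \<open>Sofic approximations of an orthogonal decomposition\<close>

text \<open>The projections 1_{dom s}, 1_{dom s_i} lie in
  Sigma F_pm^{2n}, and all products we need lie in Sigma F_pm^{4n}, where phi is almost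
  multiplicative.\<close>
locale sofic_decomposition =
  fixes M :: "'a::polish_space measure" and R :: "('a \<times> 'a) set"
    and F :: "('a \<rightharpoonup> 'a) set" and n d :: nat and \<delta> :: real
    and \<phi> :: "('a \<rightharpoonup> 'a) \<Rightarrow> (nat \<rightharpoonup> nat)"
    and s :: "'a \<rightharpoonup> 'a" and ss :: "('a \<rightharpoonup> 'a) list"
  assumes std: "std_prob_space M" and pmp: "pmp_cber M R"
    and F_pelem: "\<forall>t\<in>F. pelem M R t" and d_pos: "d \<ge> 1"
    and phi_SA: "\<phi> \<in> SA M R F (4 * n) \<delta> d"
    and s_Sigma: "s \<in> SigmaP M R (ppow (Fpm F) n)"
    and ss_Sigma: "set ss \<subseteq> SigmaP M R (ppow (Fpm F) n)"
    and ss_orth: "pw_orth M ss"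
    and s_sum: "peq M s (psum ss)"
begin

abbreviation Sig :: "('a \<rightharpoonup> 'a) set" where
  "Sig \<equiv> SigmaP M R (ppow (Fpm F) (4 * n))"

definition nonnull :: "nat set" where
  "nonnull = {i. i < length ss \<and> dom (ss!i) \<notin> null_sets M}"

lemma nonnull_less: "i \<in> nonnull \<Longrightarrow> i < length ss"
  by (simp add: nonnull_def)

lemma phi_pperm: "pelem M R X \<Longrightarrow> pperm d (\<phi> X)"
  using phi_SA unfolding SA_def by blast

lemma phi_peq: "pelem M R X \<Longrightarrow> pelem M R Y \<Longrightarrow> peq M X Y \<Longrightarrow> \<phi> X = \<phi> Y"
  using phi_SA unfolding SA_def by blast

lemma phi_mult:
  assumes X: "X \<in> Sig" and Y: "Y \<in> Sig" and Z: "Z \<in> Sig"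
    and XY: "pelem M R (X \<circ>\<^sub>m Y)" and eq: "peq M (X \<circ>\<^sub>m Y) Z"
  shows "real (card (disagr d (\<phi> Z) (\<phi> X \<circ>\<^sub>m \<phi> Y))) \<le> \<delta> * d"
proof -
  have "X \<circ>\<^sub>m Y \<in> Sig" by (rule SigmaP_peq[OF XY Z eq])
  hence "ddist d (\<phi> (X \<circ>\<^sub>m Y)) (\<phi> X \<circ>\<^sub>m \<phi> Y) < \<delta>" using phi_SA X Y unfolding SA_def by blast
  moreover have "\<phi> (X \<circ>\<^sub>m Y) = \<phi> Z" using phi_peq[OF XY SigmaP_pelem[OF Z] eq] .
  ultimately show ?thesis using card_disagr_of_ddist[OF d_pos] by simp
qed

lemma phi_mult_unit:
  assumes "X \<in> Sig" "Y \<in> Sig" "X \<circ>\<^sub>m Y = X"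
  shows "real (card (disagr d (\<phi> X) (\<phi> X \<circ>\<^sub>m \<phi> Y))) \<le> \<delta> * d"
  using phi_mult[OF assms(1,2,1)] assms SigmaP_pelem peq_refl by metis

lemma phi_trace: "X \<in> Sig \<Longrightarrow> \<bar>dtr d (\<phi> X) - ptau M X\<bar> < \<delta>"
  using phi_SA unfolding SA_def by blast

lemma Sig_of_shorter: "m \<le> 4 * n \<Longrightarrow> X \<in> SigmaP M R (ppow (Fpm F) m) \<Longrightarrow> X \<in> Sig"
  using SigmaP_mono[OF ppow_mono] by blast

lemma summand_Sig: "i < length ss \<Longrightarrow> ss!i \<in> Sig"
  using ss_Sigma Sig_of_shorter[of n] nth_mem by auto

lemma s_Sig: "s \<in> Sig"
  using Sig_of_shorter[of n] s_Sigma by simp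

lemma proj_Sig:
  assumes "X \<in> SigmaP M R (ppow (Fpm F) n)"
  shows "pone |` dom X \<in> Sig"
proof -
  have "\<forall>t\<in>F. inj_on t (dom t)" using F_pelem pelem_inj by blast
  thus ?thesis using SigmaP_proj[OF std pmp _ assms] Sig_of_shorter[of "2 * n"] by simp
qed

lemma empty_Sig: "Map.empty \<in> Sig"
  using SigmaP_empty[OF pelem_empty[OF std pmp]] .

lemma summand_pelem: "i < length ss \<Longrightarrow> pelem M R (ss!i)"
  using SigmaP_pelem[OF summand_Sig] .

lemma summand_dom_sets: "i < length ss \<Longrightarrow> dom (ss!i) \<in> sets M"
  using pelem_dom[OF summand_pelem] .

lemma s_dom_sets: "dom s \<in> sets M"
  using pelem_dom[OF SigmaP_pelem[OF s_Sig]] .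

lemma ae_summand:
  "AE x in M. s x = psum ss x \<and> (\<forall>i<length ss. \<forall>j<length ss. i \<noteq> j \<longrightarrow> x \<notin> dom (ss!i) \<inter> dom (ss!j))"
proof -
  have "AE x in M. \<forall>p\<in>{..<length ss} \<times> {..<length ss}. fst p \<noteq> snd p \<longrightarrow>
      x \<notin> dom (ss!fst p) \<inter> dom (ss!snd p)"
  proof (rule AE_finite_allI)
    fix p assume p: "p \<in> {..<length ss} \<times> {..<length ss}"
    show "AE x in M. fst p \<noteq> snd p \<longrightarrow> x \<notin> dom (ss!fst p) \<inter> dom (ss!snd p)"
    proof (cases "fst p = snd p")
      case False
      hence "dom (ss!fst p) \<inter> dom (ss!snd p) \<in> null_sets M"
        using ss_orth p by (auto simp: pw_orth_def orth_def)
      thus ?thesis by (rule AE_not_in[THEN eventually_mono]) simp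
    qed simp
  qed simp
  thus ?thesis using s_sum unfolding peq_def by eventually_elim auto
qed

lemma s_restrict_summand:
  assumes i: "i < length ss"
  shows "peq M (s |` dom (ss!i)) (ss!i)"
  unfolding peq_def using ae_summand
proof eventually_elim
  case (elim x)
  show "(s |` dom (ss!i)) x = (ss!i) x"
  proof (cases "x \<in> dom (ss!i)")
    case True
    have disj: "\<forall>i<length ss. \<forall>j<length ss. i \<noteq> j \<longrightarrow> x \<notin> dom (ss!i) \<inter> dom (ss!j)"
      and sx: "s x = psum ss x" using elim by simp_all
    have "(ss!j) x = None" if "j < length ss" "j \<noteq> i" for j
    proof -
      have "x \<notin> dom (ss!j)" using disj i that True by blast
      thus ?thesis by (simp add: domIff)
    qed
    hence "psum ss x = (ss!i) x" using i by (intro psum_unique) auto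
    thus ?thesis using sx restrict_in[OF True, of s] by simp
  next
    case False
    thus ?thesis using restrict_out[OF False, of s] by (simp add: domIff)
  qed
qed

lemma summand_dom_subset:
  assumes i: "i < length ss"
  shows "AE x in M. x \<in> dom (ss!i) \<longrightarrow> x \<in> dom s"
  using peq_psum_dom[OF s_sum] by eventually_elim (meson i nth_mem)

lemma measure_dom_s: "measure M (dom s) \<le> (\<Sum>i\<in>nonnull. measure M (dom (ss!i)))"
proof -
  have "(\<Union>i<length ss. dom (ss!i)) = (\<Union>t\<in>set ss. dom t)"
    by (auto simp: set_conv_nth)
  hence "AE x in M. x \<in> dom s \<longleftrightarrow> x \<in> (\<Union>i<length ss. dom (ss!i))"
    using peq_psum_dom[OF s_sum] by simp
  hence "measure M (dom s) = measure M (\<Union>i<length ss. dom (ss!i))"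
    using summand_dom_sets s_dom_sets by (intro measure_eq_AE) auto
  also have "\<dots> \<le> (\<Sum>i<length ss. measure M (dom (ss!i)))"
    using summand_dom_sets by (intro measure_UNION_le) auto
  also have "\<dots> = (\<Sum>i\<in>nonnull. measure M (dom (ss!i)))"
    by (rule sum.mono_neutral_right) (auto simp: nonnull_def measure_eq_0_null_sets)
  finally show ?thesis .
qed

lemma proj_summand_Sig: "i < length ss \<Longrightarrow> pone |` dom (ss!i) \<in> Sig"
  by (meson nth_mem proj_Sig subsetD ss_Sigma)

lemma proj_s_Sig: "pone |` dom s \<in> Sig"
  using proj_Sig[OF s_Sigma] .

lemma phi_proj_fixed:
  assumes "pone |` A \<in> Sig"
  shows "real (card (fixed d (\<phi> (pone |` A)))) \<le> measure M A * d + \<delta> * d"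
    and "real (card (fixed d (\<phi> (pone |` A)))) \<ge> measure M A * d - \<delta> * d"
proof -
  have "ptau M (pone |` A) = measure M A" by (simp add: ptau_def pone_def restrict_map_def)
  thus "real (card (fixed d (\<phi> (pone |` A)))) \<le> measure M A * d + \<delta> * d"
    and "real (card (fixed d (\<phi> (pone |` A)))) \<ge> measure M A * d - \<delta> * d"
    using card_fixed_of_dtr[OF d_pos phi_trace[OF assms]] by simp_all
qed

text \<open>s 1_{dom s_i} = s_i almost everywhere.\<close>
lemma summand_image_restrict:
  assumes i: "i < length ss"
  shows "real (card (disagr d (\<phi> (ss!i)) (\<phi> s \<circ>\<^sub>m \<phi> (pone |` dom (ss!i))))) \<le> \<delta> * d"
  using phi_mult[OF s_Sig proj_summand_Sig[OF i] summand_Sig[OF i]]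
    pelem_restrict[OF std pmp SigmaP_pelem[OF s_Sig] summand_dom_sets[OF i]]
    s_restrict_summand[OF i] by (simp add: comp_proj)

text \<open>1_{dom s} 1_{dom s_i} = 1_{dom s_i} almost everywhere.\<close>
lemma proj_summand_below:
  assumes i: "i < length ss"
  shows "real (card (disagr d (\<phi> (pone |` dom (ss!i))) (\<phi> (pone |` dom s) \<circ>\<^sub>m \<phi> (pone |` dom (ss!i)))))
    \<le> \<delta> * d"
proof -
  have "peq M ((pone |` dom s) \<circ>\<^sub>m (pone |` dom (ss!i))) (pone |` dom (ss!i))"
    using summand_dom_subset[OF i] unfolding peq_def proj_comp_proj
    by eventually_elim (auto simp: restrict_map_def)
  thus ?thesis
    using phi_mult[OF proj_s_Sig proj_summand_Sig[OF i] proj_summand_Sig[OF i]]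
      pelem_proj[OF std pmp] s_dom_sets summand_dom_sets[OF i]
    by (simp add: proj_comp_proj sets.Int)
qed

text \<open>1_{dom s_i} 1_{dom s_j} = 0 almost everywhere for i \<noteq> j.\<close>
lemma proj_summands_orth:
  assumes i: "i < length ss" and j: "j < length ss" and ij: "i \<noteq> j"
  shows "real (card (disagr d (\<phi> Map.empty) (\<phi> (pone |` dom (ss!i)) \<circ>\<^sub>m \<phi> (pone |` dom (ss!j)))))
    \<le> \<delta> * d"
proof -
  have "dom (ss!i) \<inter> dom (ss!j) \<in> null_sets M"
    using ss_orth i j ij unfolding pw_orth_def orth_def by auto
  hence "peq M ((pone |` dom (ss!i)) \<circ>\<^sub>m (pone |` dom (ss!j))) Map.empty"
    unfolding peq_def proj_comp_proj by (rule AE_not_in[THEN eventually_mono]) auto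
  thus ?thesis
    using phi_mult[OF proj_summand_Sig[OF i] proj_summand_Sig[OF j] empty_Sig] pelem_proj[OF std pmp]
      summand_dom_sets[OF i] summand_dom_sets[OF j] by (simp add: proj_comp_proj sets.Int)
qed

text \<open>Null summands equal 0 almost everywhere, so phi maps them to phi(0).\<close>
lemma null_summand_image:
  assumes i: "i < length ss" and null: "i \<notin> nonnull"
  shows "\<phi> (ss!i) = \<phi> Map.empty"
proof -
  have "dom (ss!i) \<in> null_sets M" using i null by (simp add: nonnull_def)
  hence "peq M (ss!i) Map.empty" unfolding peq_def by (rule AE_not_in[THEN eventually_mono]) auto
  thus ?thesis using phi_peq summand_pelem[OF i] pelem_empty[OF std pmp] by blast
qed

lemma approx_decomposition:
  "approx_decomposition d (map \<phi> ss) (\<phi> s) (\<phi> Map.empty) (\<phi> (pone |` dom s))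
     (\<lambda>i. \<phi> (pone |` dom (ss!i))) nonnull (\<delta> * d) (measure M (dom s)) (\<lambda>i. measure M (dom (ss!i)))"
proof unfold_locales
  show "\<forall>j<length (map \<phi> ss). pperm d (map \<phi> ss ! j)"
    using phi_pperm summand_pelem by simp
  show "pperm d (\<phi> s)" "pperm d (\<phi> Map.empty)" "pperm d (\<phi> (pone |` dom s))"
    using phi_pperm SigmaP_pelem s_Sig empty_Sig proj_s_Sig by blast+
  show "nonnull \<subseteq> {..<length (map \<phi> ss)}" by (auto simp: nonnull_def)
  show "\<And>i. i < length (map \<phi> ss) \<Longrightarrow> i \<notin> nonnull \<Longrightarrow> map \<phi> ss ! i = \<phi> Map.empty"
    using null_summand_image by simp
  show "real (card (disagr d (\<phi> Map.empty) (\<phi> Map.empty \<circ>\<^sub>m \<phi> Map.empty))) \<le> \<delta> * d"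
    using phi_mult_unit[OF empty_Sig empty_Sig] by simp
  show "real (card (fixed d (\<phi> Map.empty))) \<le> \<delta> * d"
    using phi_proj_fixed(1)[of "{}"] empty_Sig by simp
  show "real (card (disagr d (\<phi> s) (\<phi> s \<circ>\<^sub>m \<phi> (pone |` dom s)))) \<le> \<delta> * d"
    using phi_mult_unit[OF s_Sig proj_s_Sig] by (simp add: comp_proj restrict_map_dom_self)
  show "real (card (disagr d (\<phi> (pone |` dom s)) (\<phi> (pone |` dom s) \<circ>\<^sub>m \<phi> (pone |` dom s)))) \<le> \<delta> * d"
    using phi_mult_unit[OF proj_s_Sig proj_s_Sig] by (simp add: proj_comp_proj)
  show "real (card (fixed d (\<phi> (pone |` dom s)))) \<le> measure M (dom s) * d + \<delta> * d"
    using phi_proj_fixed(1)[OF proj_s_Sig] .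
  show "measure M (dom s) \<le> (\<Sum>i\<in>nonnull. measure M (dom (ss!i)))"
    by (rule measure_dom_s)
next
  fix i assume "i \<in> nonnull"
  hence i: "i < length ss" by (rule nonnull_less)
  show "pperm d (\<phi> (pone |` dom (ss!i)))"
    using phi_pperm SigmaP_pelem proj_summand_Sig[OF i] by blast
  show "real (card (disagr d (map \<phi> ss ! i) (\<phi> s \<circ>\<^sub>m \<phi> (pone |` dom (ss!i))))) \<le> \<delta> * d"
    using summand_image_restrict[OF i] i by simp
  show "real (card (disagr d (map \<phi> ss ! i) (map \<phi> ss ! i \<circ>\<^sub>m \<phi> (pone |` dom (ss!i))))) \<le> \<delta> * d"
    using phi_mult_unit[OF summand_Sig[OF i] proj_summand_Sig[OF i]] i
    by (simp add: comp_proj restrict_map_dom_self)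
  show "real (card (disagr d (\<phi> (pone |` dom (ss!i))) (\<phi> (pone |` dom (ss!i)) \<circ>\<^sub>m \<phi> (pone |` dom (ss!i)))))
      \<le> \<delta> * d"
    using phi_mult_unit[OF proj_summand_Sig[OF i] proj_summand_Sig[OF i]] by (simp add: proj_comp_proj)
  show "real (card (disagr d (\<phi> (pone |` dom (ss!i))) (\<phi> (pone |` dom s) \<circ>\<^sub>m \<phi> (pone |` dom (ss!i)))))
      \<le> \<delta> * d"
    using proj_summand_below[OF i] .
  show "measure M (dom (ss!i)) * d - \<delta> * d \<le> real (card (fixed d (\<phi> (pone |` dom (ss!i)))))"
    using phi_proj_fixed(2)[OF proj_summand_Sig[OF i]] .
next
  fix i j assume "i \<in> nonnull" "j \<in> nonnull" "i \<noteq> j"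
  thus "real (card (disagr d (\<phi> Map.empty) (\<phi> (pone |` dom (ss!i)) \<circ>\<^sub>m \<phi> (pone |` dom (ss!j)))))
      \<le> \<delta> * d"
    using proj_summands_orth nonnull_less by blast
qed

theorem ddist_decomposition:
  "ddist d (\<phi> s) (psum (map (\<lambda>i. \<phi> (ss!i) \<circ>\<^sub>m dpi d (map \<phi> ss) i) [0..<length ss]))
     \<le> 17 * (real (card nonnull) + 1)^2 * \<delta>"
proof -
  have eq: "map (\<lambda>i. map \<phi> ss ! i \<circ>\<^sub>m dpi d (map \<phi> ss) i) [0..<length ss]
      = map (\<lambda>i. \<phi> (ss!i) \<circ>\<^sub>m dpi d (map \<phi> ss) i) [0..<length ss]"
    by (rule map_cong) simp_all
  have "real (card (disagr d (\<phi> s) (psum (map (\<lambda>i. map \<phi> ss ! i \<circ>\<^sub>m dpi d (map \<phi> ss) i) [0..<length ss]))))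
      \<le> 17 * (real (card nonnull) + 1)^2 * \<delta> * d"
    using approx_decomposition.card_disagr_decomposition[OF approx_decomposition]
    by (simp add: mult.assoc)
  hence "real (card (disagr d (\<phi> s) (psum (map (\<lambda>i. \<phi> (ss!i) \<circ>\<^sub>m dpi d (map \<phi> ss) i) [0..<length ss]))))
      \<le> 17 * (real (card nonnull) + 1)^2 * \<delta> * d"
    unfolding eq .
  thus ?thesis using d_pos by (simp add: ddist_def disagr_def divide_le_eq)
qed

end

text \<open>With at most B non-null summands, 17 (B + 1)^2 \<le> 68 B^2 < 150 B^2.\<close>
lemma bound_arith:
  fixes B \<delta> :: real
  assumes "real K \<le> B" "1 \<le> B" "0 < \<delta>"
  shows "17 * (real K + 1)^2 * \<delta> < 150 * B^2 * \<delta>"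
proof -
  have "(real K + 1)^2 \<le> (2 * B)^2" using assms(1,2) by (intro power_mono) auto
  moreover have "1 \<le> B^2" using assms(2) by (simp add: one_le_power)
  ultimately have "17 * (real K + 1)^2 < 150 * B^2" by (simp add: power_mult_distrib)
  thus ?thesis using assms(3) by simp
qed

theorem mainTheorem7:
  fixes M :: "'a::polish_space measure" and R :: "('a \<times> 'a) set"
    and F :: "('a \<rightharpoonup> 'a) set" and n d :: nat and \<delta> :: real
    and \<phi> :: "('a \<rightharpoonup> 'a) \<Rightarrow> (nat \<rightharpoonup> nat)"
    and s :: "'a \<rightharpoonup> 'a" and ss :: "('a \<rightharpoonup> 'a) list"
  assumes "std_prob_space M" and "pmp_cber M R"
    and "finite F" and "\<forall>t\<in>F. pelem M R t"
    and "\<forall>t\<in>F. \<forall>u\<in>F. peq M t u \<longrightarrow> t = u"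
    and "n \<ge> 1" and "d \<ge> 1" and "\<delta> > 0"
    and "\<phi> \<in> SA M R F (4 * n) \<delta> d"
    and "s \<in> SigmaP M R (ppow (Fpm F) n)"
    and "set ss \<subseteq> SigmaP M R (ppow (Fpm F) n)"
    and "pw_orth M ss"
    and "peq M s (psum ss)"
  shows "ddist d (\<phi> s)
           (psum (map (\<lambda>i. map_comp (\<phi> (ss ! i)) (dpi d (map \<phi> ss) i)) [0..<length ss]))
         < 150 * (2 * real (card F) + 1) ^ (2 * n) * \<delta>"
proof -
  interpret sofic_decomposition M R F n d \<delta> \<phi> s ss
    using assms by unfold_locales auto
  have "card nonnull \<le> (2 * card F + 1) ^ n"
    using card_nonnull_summands[OF finite_ppow[OF assms(3)] assms(11,12)] card_ppow[OF assms(3), of n]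
    unfolding nonnull_def by linarith
  hence "real (card nonnull) \<le> (2 * real (card F) + 1) ^ n"
    by (metis of_nat_Suc of_nat_le_iff of_nat_mult of_nat_numeral of_nat_power Suc_eq_plus1 add.commute)
  hence "17 * (real (card nonnull) + 1)^2 * \<delta> < 150 * ((2 * real (card F) + 1) ^ n)^2 * \<delta>"
    using assms(8) by (intro bound_arith) simp_all
  thus ?thesis using ddist_decomposition by (simp add: power_mult[symmetric] mult.commute)
qed

end
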